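(* Let $(\Gamma,\mathbbm{m})$ be a bipartite Brauer graph with bipartition $V=V_1\sqcup V_2$, and let $Q'_\Gamma$, $I'_\Gamma$ be as below. Let $R_\Gamma$ be the set of the following pairs $(s,\varphi_s)$: (a) for each edge $\bar h$ joining a non-truncated vertex $v\in V_1$ to a vertex $w\in V_2$: $(C_{v,\bar h}^{\mathbbm{m}(v)},\,C_{w,\bar h}^{\mathbbm{m}(w)})$; (b) for each half-edge $h$ with $s(h)\in V_2$: $(C_{\alpha_h}^{\mathbbm{m}(s(h))}\alpha_h,\,0)$; (c) for all arrows $\alpha,\beta$ of $Q'_\Gamma$ with $t(\beta)=o(\alpha)$ and $\sigma(\alpha)\neq\beta$: $(\alpha\beta,0)$. Then $R_\Gamma$ is a reduction system for $\Bbbk Q'_\Gamma$ which satisfies the diamond condition for $I'_\Gamma$. Consequently the paths of $Q'_\Gamma$ containing no $s$ (with $(s,\varphi_s)\in R_\Gamma$) as a subpath project to a $\Bbbk$-basis of $\Bbbk Q'_\Gamma/I'_\Gamma\cong B_\Gamma$.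
   Context: Throughout, $\Bbbk$ is an algebraically closed field of characteristic $0$. Paths are written right to left ($\alpha_n\cdots\alpha_1$ starts with $\alpha_1$); $o(p),t(p)$ are origin and terminus; $e_x$ is the trivial path at $x$. A ribbon graph is $\Gamma=(V,H,s,\iota,\rho)$: $V$ finite (vertices), $H$ finite (half-edges), $s:H\to V$, $\iota$ a fixed-point-free involution of $H$, $\rho$ a permutation of $H$ whose cycles are exactly the sets $H_v=s^{-1}(v)$. Edges are $\bar h=\{h,\iota(h)\}$, joining $s(h)$ and $s(\iota(h))$; $\mathrm{val}(v)=|H_v|$; $h^\pm=\rho^{\pm1}(h)$; $\Gamma$ connected. A Brauer graph is $(\Gamma,\mathbbm{m})$, $\mathbbm{m}:V\to\mathbb{Z}_{>0}$; $v$ is truncated if $\mathbbm{m}(v)=\mathrm{val}(v)=1$. $Q_\Gamma$ has vertex set the edges and arrows $\alpha_h:\bar h\to\overline{h^+}$ ($h\in H$), called arrows around $s(h)$; $\sigma(\alpha_h)=\alpha_{h^-}$; for $\alpha=\alpha_h$, $C_\alpha=\alpha\sigma(\alpha)\cdots\sigma^{l}(\alpha)$ with $l+1=\mathrm{val}(s(h))$ (cycle at $t(\alpha)$ with last arrow $\alpha$), $\mathbbm{m}(C_\alpha)=\mathbbm{m}(s(h))$. For an edge $\bar h$ and an endpoint $u$ of $\bar h$, $C_{u,\bar h}$ denotes $C_\alpha$ for the arrow $\alpha$ around $u$ ending at $\bar h$. $I_\Gamma$ is generated by (I) $\alpha\beta$ for arrows with $t(\beta)=o(\alpha)$, $\beta\ne\sigma(\alpha)$,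 and (II) for each edge $\bar h$ with endpoints $u,u'$ (as half-edges $h,\iota(h)$), $C_{u,\bar h}^{\mathbbm{m}(u)}-C_{u',\bar h}^{\mathbbm{m}(u')}$. $B_\Gamma=\Bbbk Q_\Gamma/I_\Gamma$. $\Gamma$ is bipartite if $V=V_1\sqcup V_2$ with every edge joining $V_1$ to $V_2$. $Q'_\Gamma$ is obtained from $Q_\Gamma$ by deleting the loops $\alpha_h$ with $s(h)\in V_1$ truncated, and $I'_\Gamma=I_\Gamma\cap\Bbbk Q'_\Gamma$. A reduction system for $\Bbbk Q$ is a set $R$ of pairs $(s,\varphi_s)$ with $s$ a path of length $\ge2$, no $s$ a subpath of a different $s'$, and $\varphi_s$ a linear combination of paths parallel to $s$ (same origin and terminus) none of which contains any $s'$ as a subpath. A reduction replaces, in a path $p=qsr$, the subpath $s$ by $\varphi_s$ (giving $q\varphi_s r$, extended linearly). $R$ satisfies the diamond condition for an ideal $I$ if (i) $I$ is generated by $\{s-\varphi_s\}$ and (ii) every path is reduction-unique: all sequences of reductions terminate and all lead to the same element spanned by irreducible paths (paths containing no $s$). *)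

theory Defs
  imports Main
begin

text \<open>A path is a pair (origin, arrows), where the arrow list is written right to left
  (composition order): the path [a_n, ..., a_1] starts with a_1.  The origin component
  is only needed to distinguish trivial paths e_x.\<close>

type_synonym ('x,'a) path = "'x \<times> 'a list"

definition valid_path :: "'x set \<Rightarrow> 'a set \<Rightarrow> ('a \<Rightarrow> 'x) \<Rightarrow> ('a \<Rightarrow> 'x) \<Rightarrow> ('x,'a) path \<Rightarrow> bool" where
  "valid_path Vq A src tgt p \<longleftrightarrow>
     fst p \<in> Vq \<and> set (snd p) \<subseteq> A \<and>
     (snd p \<noteq> [] \<longrightarrow> src (last (snd p)) = fst p) \<and>
     (\<forall>i. Suc i < length (snd p) \<longrightarrow> src (snd p ! i) = tgt (snd p ! Suc i))"

definition ptgt :: "('a \<Rightarrow> 'x) \<Rightarrow> ('x,'a) path \<Rightarrow> 'x" where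
  "ptgt tgt p = (if snd p = [] then fst p else tgt (hd (snd p)))"

text \<open>Concatenation p q (first q, then p); meaningful when ptgt q = fst p.\<close>
definition pcomp :: "('x,'a) path \<Rightarrow> ('x,'a) path \<Rightarrow> ('x,'a) path" where
  "pcomp p q = (fst q, snd p @ snd q)"

definition path_alg :: "(('x,'a) path \<Rightarrow> bool) \<Rightarrow> (('x,'a) path \<Rightarrow> 'k::field) set" where
  "path_alg valid = {f. finite {p. f p \<noteq> 0} \<and> (\<forall>p. f p \<noteq> 0 \<longrightarrow> valid p)}"

definition pvec :: "('x,'a) path \<Rightarrow> (('x,'a) path \<Rightarrow> 'k::field)" where
  "pvec p = (\<lambda>q. if q = p then 1 else 0)"

definition amult :: "('a \<Rightarrow> 'x) \<Rightarrow> (('x,'a) path \<Rightarrow> 'k::field) \<Rightarrow> (('x,'a) path \<Rightarrow> 'k) \<Rightarrow> (('x,'a) path \<Rightarrow> 'k)" where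
  "amult tgt f g = (\<lambda>r. \<Sum>pq \<in> {(p,q). f p \<noteq> 0 \<and> g q \<noteq> 0 \<and> ptgt tgt q = fst p \<and> pcomp p q = r}.
                        f (fst pq) * g (snd pq))"

inductive_set ideal_gen :: "(('x,'a) path \<Rightarrow> bool) \<Rightarrow> ('a \<Rightarrow> 'x) \<Rightarrow> (('x,'a) path \<Rightarrow> 'k::field) set
    \<Rightarrow> (('x,'a) path \<Rightarrow> 'k) set"
  for valid tgt G where
  zero: "(\<lambda>_. 0) \<in> ideal_gen valid tgt G"
| gen: "g \<in> G \<Longrightarrow> g \<in> ideal_gen valid tgt G"
| add: "x \<in> ideal_gen valid tgt G \<Longrightarrow> y \<in> ideal_gen valid tgt G \<Longrightarrow> (\<lambda>p. x p + y p) \<in> ideal_gen valid tgt G"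
| smult: "x \<in> ideal_gen valid tgt G \<Longrightarrow> (\<lambda>p. c * x p) \<in> ideal_gen valid tgt G"
| lmult: "x \<in> ideal_gen valid tgt G \<Longrightarrow> valid q \<Longrightarrow> amult tgt (pvec q) x \<in> ideal_gen valid tgt G"
| rmult: "x \<in> ideal_gen valid tgt G \<Longrightarrow> valid q \<Longrightarrow> amult tgt x (pvec q) \<in> ideal_gen valid tgt G"

definition subpath :: "('x,'a) path \<Rightarrow> ('x,'a) path \<Rightarrow> bool" where
  "subpath s p \<longleftrightarrow> (\<exists>a b. snd p = a @ snd s @ b)"

definition irreducible_path :: "(('x,'a) path \<times> (('x,'a) path \<Rightarrow> 'k)) set \<Rightarrow> ('x,'a) path \<Rightarrow> bool" where
  "irreducible_path R p \<longleftrightarrow> \<not> (\<exists>sp \<in> R. subpath (fst sp) p)"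

definition reduction_system :: "(('x,'a) path \<Rightarrow> bool) \<Rightarrow> ('a \<Rightarrow> 'x)
    \<Rightarrow> (('x,'a) path \<times> (('x,'a) path \<Rightarrow> 'k::field)) set \<Rightarrow> bool" where
  "reduction_system valid tgt R \<longleftrightarrow>
     (\<forall>(s,\<phi>) \<in> R. valid s \<and> length (snd s) \<ge> 2 \<and> \<phi> \<in> path_alg valid \<and>
        (\<forall>u. \<phi> u \<noteq> 0 \<longrightarrow> fst u = fst s \<and> ptgt tgt u = ptgt tgt s \<and> irreducible_path R u)) \<and>
     (\<forall>(s,\<phi>) \<in> R. \<forall>(s',\<phi>') \<in> R. s \<noteq> s' \<longrightarrow> \<not> subpath s s')"

text \<open>One (non-trivially acting) reduction step: the basis path u = q s r occurring in f
  with non-zero coefficient is replaced by q phi_s r.\<close>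
definition red_step :: "(('x,'a) path \<Rightarrow> bool) \<Rightarrow> ('a \<Rightarrow> 'x)
    \<Rightarrow> (('x,'a) path \<times> (('x,'a) path \<Rightarrow> 'k::field)) set
    \<Rightarrow> (('x,'a) path \<Rightarrow> 'k) \<Rightarrow> (('x,'a) path \<Rightarrow> 'k) \<Rightarrow> bool" where
  "red_step valid tgt R f g \<longleftrightarrow>
     (\<exists>s \<phi> q r. (s,\<phi>) \<in> R \<and> valid q \<and> valid r \<and> ptgt tgt r = fst s \<and> ptgt tgt s = fst q \<and>
        f (pcomp q (pcomp s r)) \<noteq> 0 \<and>
        g = (\<lambda>x. f x + f (pcomp q (pcomp s r)) *
               (amult tgt (amult tgt (pvec q) \<phi>) (pvec r) x - pvec (pcomp q (pcomp s r)) x)))"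

definition reduction_unique :: "(('x,'a) path \<Rightarrow> bool) \<Rightarrow> ('a \<Rightarrow> 'x)
    \<Rightarrow> (('x,'a) path \<times> (('x,'a) path \<Rightarrow> 'k::field)) set \<Rightarrow> ('x,'a) path \<Rightarrow> bool" where
  "reduction_unique valid tgt R p \<longleftrightarrow>
     \<not> (\<exists>c. c 0 = pvec p \<and> (\<forall>n. red_step valid tgt R (c n) (c (Suc n)))) \<and>
     (\<forall>g1 g2. (red_step valid tgt R)\<^sup>*\<^sup>* (pvec p) g1 \<and> (\<forall>u. g1 u \<noteq> 0 \<longrightarrow> irreducible_path R u) \<and>
              (red_step valid tgt R)\<^sup>*\<^sup>* (pvec p) g2 \<and> (\<forall>u. g2 u \<noteq> 0 \<longrightarrow> irreducible_path R u)
              \<longrightarrow> g1 = g2)"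

definition diamond_condition :: "(('x,'a) path \<Rightarrow> bool) \<Rightarrow> ('a \<Rightarrow> 'x)
    \<Rightarrow> (('x,'a) path \<times> (('x,'a) path \<Rightarrow> 'k::field)) set \<Rightarrow> (('x,'a) path \<Rightarrow> 'k) set \<Rightarrow> bool" where
  "diamond_condition valid tgt R I \<longleftrightarrow>
     I = ideal_gen valid tgt {(\<lambda>x. pvec s x - \<phi> x) | s \<phi>. (s,\<phi>) \<in> R} \<and>
     (\<forall>p. valid p \<longrightarrow> reduction_unique valid tgt R p)"

definition ribbon_graph :: "'v set \<Rightarrow> 'h set \<Rightarrow> ('h \<Rightarrow> 'v) \<Rightarrow> ('h \<Rightarrow> 'h) \<Rightarrow> ('h \<Rightarrow> 'h) \<Rightarrow> bool" where
  "ribbon_graph V H s \<iota> \<rho> \<longleftrightarrow>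
     finite V \<and> finite H \<and> (\<forall>h\<in>H. s h \<in> V) \<and>
     (\<forall>h\<in>H. \<iota> h \<in> H \<and> \<iota> h \<noteq> h \<and> \<iota> (\<iota> h) = h) \<and>
     bij_betw \<rho> H H \<and>
     (\<forall>v\<in>V. \<exists>h\<in>H. s h = v) \<and>
     (\<forall>h\<in>H. \<forall>h'\<in>H. s h = s h' \<longleftrightarrow> (\<exists>n. (\<rho> ^^ n) h = h')) \<and>
     (\<forall>u\<in>V. \<forall>w\<in>V. (u, w) \<in> {(s h, s (\<iota> h)) | h. h \<in> H}\<^sup>*)"

definition brauer_graph :: "'v set \<Rightarrow> 'h set \<Rightarrow> ('h \<Rightarrow> 'v) \<Rightarrow> ('h \<Rightarrow> 'h) \<Rightarrow> ('h \<Rightarrow> 'h) \<Rightarrow> ('v \<Rightarrow> nat) \<Rightarrow> bool" where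
  "brauer_graph V H s \<iota> \<rho> m \<longleftrightarrow> ribbon_graph V H s \<iota> \<rho> \<and> (\<forall>v\<in>V. m v > 0)"

definition bipartition :: "'v set \<Rightarrow> 'h set \<Rightarrow> ('h \<Rightarrow> 'v) \<Rightarrow> ('h \<Rightarrow> 'h) \<Rightarrow> 'v set \<Rightarrow> 'v set \<Rightarrow> bool" where
  "bipartition V H s \<iota> V1 V2 \<longleftrightarrow> V1 \<inter> V2 = {} \<and> V1 \<union> V2 = V \<and>
     (\<forall>h\<in>H. (s h \<in> V1 \<and> s (\<iota> h) \<in> V2) \<or> (s h \<in> V2 \<and> s (\<iota> h) \<in> V1))"

definition valency :: "'h set \<Rightarrow> ('h \<Rightarrow> 'v) \<Rightarrow> 'v \<Rightarrow> nat" where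
  "valency H s v = card {h\<in>H. s h = v}"

definition truncated :: "'h set \<Rightarrow> ('h \<Rightarrow> 'v) \<Rightarrow> ('v \<Rightarrow> nat) \<Rightarrow> 'v \<Rightarrow> bool" where
  "truncated H s m v \<longleftrightarrow> m v = 1 \<and> valency H s v = 1"

text \<open>Quiver Q_Gamma: vertices are edges {h, iota h}; the arrow alpha_h is identified with h.\<close>
definition edges :: "'h set \<Rightarrow> ('h \<Rightarrow> 'h) \<Rightarrow> 'h set set" where
  "edges H \<iota> = {{h, \<iota> h} | h. h \<in> H}"

definition bsrc :: "('h \<Rightarrow> 'h) \<Rightarrow> 'h \<Rightarrow> 'h set" where
  "bsrc \<iota> h = {h, \<iota> h}"

definition btgt :: "('h \<Rightarrow> 'h) \<Rightarrow> ('h \<Rightarrow> 'h) \<Rightarrow> 'h \<Rightarrow> 'h set" where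
  "btgt \<iota> \<rho> h = {\<rho> h, \<iota> (\<rho> h)}"

text \<open>sigma(alpha_h) = alpha_(rho^-1 h).\<close>
definition bsigma :: "'h set \<Rightarrow> ('h \<Rightarrow> 'h) \<Rightarrow> 'h \<Rightarrow> 'h" where
  "bsigma H \<rho> = inv_into H \<rho>"

text \<open>cyc_at h = C_(s h, edge h) = C_alpha for the arrow alpha around s h ending at the
  edge of h, i.e. alpha = sigma(alpha_h) ... ; written list
  [sigma h, sigma^2 h, ..., sigma^val h = h].  So C_(alpha_h) = cyc_at (rho h).\<close>
definition cyc_at :: "'h set \<Rightarrow> ('h \<Rightarrow> 'v) \<Rightarrow> ('h \<Rightarrow> 'h) \<Rightarrow> 'h \<Rightarrow> 'h list" where
  "cyc_at H s \<rho> h = map (\<lambda>i. (bsigma H \<rho> ^^ Suc i) h) [0..<valency H s (s h)]"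

definition ppow :: "'h list \<Rightarrow> nat \<Rightarrow> 'h list" where
  "ppow c n = concat (replicate n c)"

definition mkP :: "('h \<Rightarrow> 'h) \<Rightarrow> 'h list \<Rightarrow> ('h set, 'h) path" where
  "mkP \<iota> as = (bsrc \<iota> (last as), as)"

definition validQ :: "'h set \<Rightarrow> ('h \<Rightarrow> 'h) \<Rightarrow> ('h \<Rightarrow> 'h) \<Rightarrow> ('h set, 'h) path \<Rightarrow> bool" where
  "validQ H \<iota> \<rho> = valid_path (edges H \<iota>) H (bsrc \<iota>) (btgt \<iota> \<rho>)"

definition I_Gamma :: "'h set \<Rightarrow> ('h \<Rightarrow> 'v) \<Rightarrow> ('h \<Rightarrow> 'h) \<Rightarrow> ('h \<Rightarrow> 'h) \<Rightarrow> ('v \<Rightarrow> nat)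
    \<Rightarrow> (('h set, 'h) path \<Rightarrow> 'k::field) set" where
  "I_Gamma H s \<iota> \<rho> m = ideal_gen (validQ H \<iota> \<rho>) (btgt \<iota> \<rho>)
     ({pvec (mkP \<iota> [a, b]) | a b. a \<in> H \<and> b \<in> H \<and> btgt \<iota> \<rho> b = bsrc \<iota> a \<and> b \<noteq> bsigma H \<rho> a} \<union>
      {(\<lambda>x. pvec (mkP \<iota> (ppow (cyc_at H s \<rho> h) (m (s h)))) x
            - pvec (mkP \<iota> (ppow (cyc_at H s \<rho> (\<iota> h)) (m (s (\<iota> h))))) x) | h. h \<in> H})"

text \<open>Q'_Gamma: delete the loops alpha_h with s h in V1 truncated.\<close>
definition arrowsQ' :: "'h set \<Rightarrow> ('h \<Rightarrow> 'v) \<Rightarrow> ('v \<Rightarrow> nat) \<Rightarrow> 'v set \<Rightarrow> 'h set" where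
  "arrowsQ' H s m V1 = {h \<in> H. \<not> (s h \<in> V1 \<and> truncated H s m (s h))}"

definition validQ' :: "'h set \<Rightarrow> ('h \<Rightarrow> 'v) \<Rightarrow> ('h \<Rightarrow> 'h) \<Rightarrow> ('h \<Rightarrow> 'h) \<Rightarrow> ('v \<Rightarrow> nat) \<Rightarrow> 'v set
    \<Rightarrow> ('h set, 'h) path \<Rightarrow> bool" where
  "validQ' H s \<iota> \<rho> m V1 = valid_path (edges H \<iota>) (arrowsQ' H s m V1) (bsrc \<iota>) (btgt \<iota> \<rho>)"

definition I'_Gamma :: "'h set \<Rightarrow> ('h \<Rightarrow> 'v) \<Rightarrow> ('h \<Rightarrow> 'h) \<Rightarrow> ('h \<Rightarrow> 'h) \<Rightarrow> ('v \<Rightarrow> nat) \<Rightarrow> 'v set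
    \<Rightarrow> (('h set, 'h) path \<Rightarrow> 'k::field) set" where
  "I'_Gamma H s \<iota> \<rho> m V1 = I_Gamma H s \<iota> \<rho> m \<inter> path_alg (validQ' H s \<iota> \<rho> m V1)"

definition R_Gamma :: "'h set \<Rightarrow> ('h \<Rightarrow> 'v) \<Rightarrow> ('h \<Rightarrow> 'h) \<Rightarrow> ('h \<Rightarrow> 'h) \<Rightarrow> ('v \<Rightarrow> nat) \<Rightarrow> 'v set \<Rightarrow> 'v set
    \<Rightarrow> (('h set, 'h) path \<times> (('h set, 'h) path \<Rightarrow> 'k::field)) set" where
  "R_Gamma H s \<iota> \<rho> m V1 V2 =
     {(mkP \<iota> (ppow (cyc_at H s \<rho> h) (m (s h))), pvec (mkP \<iota> (ppow (cyc_at H s \<rho> (\<iota> h)) (m (s (\<iota> h)))))) | h.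
         h \<in> H \<and> s h \<in> V1 \<and> \<not> truncated H s m (s h) \<and> s (\<iota> h) \<in> V2} \<union>
     {(mkP \<iota> (ppow (cyc_at H s \<rho> (\<rho> h)) (m (s h)) @ [h]), (\<lambda>_. 0)) | h. h \<in> H \<and> s h \<in> V2} \<union>
     {(mkP \<iota> [a, b], (\<lambda>_. 0)) | a b. a \<in> arrowsQ' H s m V1 \<and> b \<in> arrowsQ' H s m V1 \<and>
         btgt \<iota> \<rho> b = bsrc \<iota> a \<and> bsigma H \<rho> a \<noteq> b}"

definition alg_closed :: "'k::field itself \<Rightarrow> bool" where
  "alg_closed _ \<longleftrightarrow> (\<forall>(n::nat) (c::nat \<Rightarrow> 'k). n > 0 \<longrightarrow> (\<exists>x. x ^ n + (\<Sum>i<n. c i * x ^ i) = 0))"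

end

theory Submission
  imports Defs
begin

text \<open>The proof constructs an explicit normal form. A path is zero in \<open>B\<^sub>\<Gamma>\<close> unless it is a
  subpath of a power of a special cycle; such a path is irreducible if it is shorter than \<open>C\<^sup>m\<close>
  (at a vertex of \<open>V\<^sub>1\<close>) or not longer than \<open>C\<^sup>m\<close> (at a vertex of \<open>V\<^sub>2\<close>), a full power \<open>C\<^sup>m\<close> at a
  vertex of \<open>V\<^sub>1\<close> equals the one at the other end of its edge, and everything longer is zero.
  Extended linearly, this normal form \<open>nf\<close> satisfies: \<open>f - nf f\<close> lies in the ideal generated by
  \<open>R\<^sub>\<Gamma>\<close>; \<open>nf\<close> vanishes on \<open>I\<^sub>\<Gamma>\<close>, since the generators of \<open>I\<^sub>\<Gamma>\<close> are killed by it in every two-sided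
  context; \<open>nf\<close> fixes irreducible elements; and every reduction preserves \<open>nf\<close> while lowering a
  measure counting arrows around vertices of \<open>V\<^sub>1\<close>. So reductions terminate, every irreducible
  result of reducing \<open>p\<close> equals \<open>nf p\<close>, and the irreducible paths form a basis.\<close>

section \<open>Paths and the path algebra\<close>

lemma successively_iff_nth:
  "successively P xs \<longleftrightarrow> (\<forall>i. Suc i < length xs \<longrightarrow> P (xs ! i) (xs ! Suc i))"
  by (induction P xs rule: successively.induct) (auto simp: nth_Cons split: nat.split)

lemma fst_pcomp [simp]: "fst (pcomp q p) = fst p"
  by (simp add: pcomp_def)

lemma snd_pcomp [simp]: "snd (pcomp q p) = snd q @ snd p"
  by (simp add: pcomp_def)

lemma snd_mkP [simp]: "snd (mkP \<iota> xs) = xs"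
  by (simp add: mkP_def)

lemma pcomp_cancel_left: "pcomp q p = pcomp q p' \<Longrightarrow> p = p'"
  by (simp add: pcomp_def prod_eq_iff)

lemma pcomp_cancel_right: "pcomp p r = pcomp p' r \<Longrightarrow> fst p = fst p' \<Longrightarrow> p = p'"
  by (simp add: pcomp_def prod_eq_iff)

lemma ptgt_pcomp_left: "ptgt tgt p = fst q \<Longrightarrow> ptgt tgt (pcomp q p) = ptgt tgt q"
  by (cases "snd q") (auto simp: ptgt_def pcomp_def)

lemma ptgt_pcomp_right: "fst p = ptgt tgt r \<Longrightarrow> ptgt tgt (pcomp p r) = ptgt tgt p"
  by (cases "snd p") (auto simp: ptgt_def pcomp_def)

lemma valid_path_iff:
  "valid_path V A src tgt (x, xs) \<longleftrightarrow>
     x \<in> V \<and> set xs \<subseteq> A \<and> (xs \<noteq> [] \<longrightarrow> src (last xs) = x) \<and>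
     successively (\<lambda>a b. src a = tgt b) xs"
  by (simp add: valid_path_def successively_iff_nth)

lemma valid_path_pcomp:
  assumes "valid_path V A src tgt q" "valid_path V A src tgt p" "ptgt tgt p = fst q"
  shows "valid_path V A src tgt (pcomp q p)"
  using assms by (cases q, cases p)
    (auto simp: valid_path_iff pcomp_def ptgt_def successively_append_iff split: if_splits)

lemma valid_path_appendD:
  assumes "valid_path V A src tgt (x, xs @ ys)" and "\<forall>a\<in>A. tgt a \<in> V"
  shows "valid_path V A src tgt (x, ys)" "valid_path V A src tgt (ptgt tgt (x, ys), xs)"
  using assms by (auto simp: valid_path_iff ptgt_def successively_append_iff dest: hd_in_set)

lemma pvec_nonzeroD: "(pvec a :: _ \<Rightarrow> 'k::field) v \<noteq> 0 \<Longrightarrow> v = a"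
  by (simp add: pvec_def split: if_splits)

lemma amult_pvec_left:
  fixes f :: "('x,'a) path \<Rightarrow> 'k::field"
  shows "amult tgt (pvec q) f u =
    (if (\<exists>l. snd u = snd q @ l) \<and> ptgt tgt (fst u, drop (length (snd q)) (snd u)) = fst q
     then f (fst u, drop (length (snd q)) (snd u)) else 0)"
proof -
  define p where "p = (fst u, drop (length (snd q)) (snd u))"
  define C where "C \<longleftrightarrow> (\<exists>l. snd u = snd q @ l) \<and> ptgt tgt p = fst q"
  have "{(p', p''). pvec q p' \<noteq> (0::'k) \<and> f p'' \<noteq> 0 \<and> ptgt tgt p'' = fst p' \<and> pcomp p' p'' = u} =
      (if C \<and> f p \<noteq> 0 then {(q, p)} else {})"
    by (cases u) (auto simp: pvec_def pcomp_def p_def C_def prod_eq_iff split: if_splits dest: sym)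
  note support = this[unfolded p_def C_def]
  show ?thesis
    unfolding amult_def support by (simp add: pvec_def)
qed

lemma amult_pvec_right:
  fixes f :: "('x,'a) path \<Rightarrow> 'k::field"
  shows "amult tgt f (pvec r) u =
    (if (\<exists>l. snd u = l @ snd r) \<and> fst u = fst r
     then f (ptgt tgt r, take (length (snd u) - length (snd r)) (snd u)) else 0)"
proof -
  define p where "p = (ptgt tgt r, take (length (snd u) - length (snd r)) (snd u))"
  define C where "C \<longleftrightarrow> (\<exists>l. snd u = l @ snd r) \<and> fst u = fst r"
  have "{(p', p''). f p' \<noteq> (0::'k) \<and> pvec r p'' \<noteq> 0 \<and> ptgt tgt p'' = fst p' \<and> pcomp p' p'' = u} =
      (if C \<and> f p \<noteq> 0 then {(p, r)} else {})"
    by (cases u) (auto simp: pvec_def pcomp_def p_def C_def prod_eq_iff split: if_splits dest: sym)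
  note support = this[unfolded p_def C_def]
  show ?thesis
    unfolding amult_def support by (simp add: pvec_def)
qed

lemma amult_pvec_left_pcomp: "ptgt tgt p = fst q \<Longrightarrow> amult tgt (pvec q) f (pcomp q p) = f p"
  by (simp add: amult_pvec_left pcomp_def)

lemma amult_pvec_right_pcomp: "fst p = ptgt tgt r \<Longrightarrow> amult tgt f (pvec r) (pcomp p r) = f p"
  by (cases p) (simp add: amult_pvec_right pcomp_def)

lemma amult_pvec_left_nonzeroD:
  "amult tgt (pvec q) f u \<noteq> 0 \<Longrightarrow> \<exists>p. ptgt tgt p = fst q \<and> u = pcomp q p \<and> f p \<noteq> 0"
  by (cases u) (auto simp: amult_pvec_left pcomp_def split: if_splits)

lemma amult_pvec_right_nonzeroD:
  "amult tgt f (pvec r) u \<noteq> 0 \<Longrightarrow> \<exists>p. fst p = ptgt tgt r \<and> u = pcomp p r \<and> f p \<noteq> 0"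
  by (cases u) (auto simp: amult_pvec_right pcomp_def split: if_splits)

lemma amult_pvec_pvec_left:
  assumes "ptgt tgt t = fst q"
  shows "amult tgt (pvec q) (pvec t) = (pvec (pcomp q t) :: _ \<Rightarrow> 'k::field)"
proof
  fix u
  show "amult tgt (pvec q) (pvec t) u = (pvec (pcomp q t) u :: 'k)"
  proof (cases "u = pcomp q t")
    case False
    have "amult tgt (pvec q) (pvec t) u = (0::'k)"
      using amult_pvec_left_nonzeroD False pvec_nonzeroD by metis
    with False show ?thesis
      by (simp add: pvec_def)
  qed (use amult_pvec_left_pcomp[OF assms, of "pvec t"] in \<open>simp add: pvec_def\<close>)
qed

lemma amult_pvec_pvec_right:
  assumes "fst t = ptgt tgt r"
  shows "amult tgt (pvec t) (pvec r) = (pvec (pcomp t r) :: _ \<Rightarrow> 'k::field)"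
proof
  fix u
  show "amult tgt (pvec t) (pvec r) u = (pvec (pcomp t r) u :: 'k)"
  proof (cases "u = pcomp t r")
    case False
    have "amult tgt (pvec t) (pvec r) u = (0::'k)"
      using amult_pvec_right_nonzeroD False pvec_nonzeroD by metis
    with False show ?thesis
      by (simp add: pvec_def)
  qed (use amult_pvec_right_pcomp[OF assms, of "pvec t"] in \<open>simp add: pvec_def\<close>)
qed

lemma amult_pvec_left_diff:
  "amult tgt (pvec q) (\<lambda>x. f x - g x) = (\<lambda>u. amult tgt (pvec q) f u - amult tgt (pvec q) g u)"
  by (rule ext) (simp add: amult_pvec_left)

lemma amult_pvec_right_diff:
  "amult tgt (\<lambda>x. f x - g x) (pvec r) = (\<lambda>u. amult tgt f (pvec r) u - amult tgt g (pvec r) u)"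
  by (rule ext) (simp add: amult_pvec_right)

lemma amult_pvec_left_zero [simp]: "amult tgt (pvec q) (\<lambda>_. 0) = (\<lambda>_. 0)"
  by (rule ext) (simp add: amult_pvec_left)

lemma amult_pvec_right_zero [simp]: "amult tgt (\<lambda>_. 0) (pvec r) = (\<lambda>_. 0)"
  by (rule ext) (simp add: amult_pvec_right)

lemma finite_support_pvec: "finite {u. (pvec p :: _ \<Rightarrow> 'k::field) u \<noteq> 0}"
  by (rule finite_subset[of _ "{p}"]) (auto simp: pvec_def)

lemma finite_support_add:
  "finite {p. x p \<noteq> 0} \<Longrightarrow> finite {p. y p \<noteq> 0} \<Longrightarrow> finite {p. x p + y p \<noteq> (0::'k::field)}"
  by (rule finite_subset[of _ "{p. x p \<noteq> 0} \<union> {p. y p \<noteq> 0}"]) auto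

lemma finite_support_diff:
  "finite {p. x p \<noteq> 0} \<Longrightarrow> finite {p. y p \<noteq> 0} \<Longrightarrow> finite {p. x p - y p \<noteq> (0::'k::field)}"
  by (rule finite_subset[of _ "{p. x p \<noteq> 0} \<union> {p. y p \<noteq> 0}"]) auto

lemma finite_support_smult: "finite {p. x p \<noteq> 0} \<Longrightarrow> finite {p. c * x p \<noteq> (0::'k::field)}"
  by (rule finite_subset[of _ "{p. x p \<noteq> 0}"]) auto

lemma pvec_in_path_alg: "valid p \<Longrightarrow> (pvec p :: _ \<Rightarrow> 'k::field) \<in> path_alg valid"
  using finite_support_pvec pvec_nonzeroD unfolding path_alg_def by blast

lemma zero_in_path_alg [simp]: "(\<lambda>_. 0 :: 'k::field) \<in> path_alg valid"
  by (simp add: path_alg_def)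

lemma path_alg_diff: "x \<in> path_alg valid \<Longrightarrow> y \<in> path_alg valid \<Longrightarrow> (\<lambda>p. x p - y p) \<in> path_alg valid"
  unfolding path_alg_def using finite_support_diff[of x y] by (simp, metis diff_self)

lemma path_alg_mono: "x \<in> path_alg valid \<Longrightarrow> (\<And>p. valid p \<Longrightarrow> valid' p) \<Longrightarrow> x \<in> path_alg valid'"
  unfolding path_alg_def by blast

lemma ideal_gen_diff:
  assumes "x \<in> ideal_gen valid tgt G" "y \<in> ideal_gen valid tgt G"
  shows "(\<lambda>p. x p - y p) \<in> ideal_gen valid tgt G"
  using ideal_gen.add[OF assms(1) ideal_gen.smult[OF assms(2), of "-1"]] by simp

lemma ideal_gen_sum:
  assumes "finite S" "\<And>i. i \<in> S \<Longrightarrow> g i \<in> ideal_gen valid tgt G"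
  shows "(\<lambda>p. \<Sum>i\<in>S. c i * g i p) \<in> ideal_gen valid tgt G"
  using assms
proof (induction S rule: finite_induct)
  case empty
  then show ?case by (simp add: ideal_gen.zero)
next
  case (insert a S)
  have "(\<lambda>p. c a * g a p + (\<Sum>i\<in>S. c i * g i p)) \<in> ideal_gen valid tgt G"
    using insert by (intro ideal_gen.add ideal_gen.smult) auto
  with insert show ?case by simp
qed

lemma ideal_gen_mono:
  assumes "x \<in> ideal_gen valid tgt G"
    and "\<And>p. valid p \<Longrightarrow> valid' p" "\<And>g. g \<in> G \<Longrightarrow> g \<in> ideal_gen valid' tgt G'"
  shows "x \<in> ideal_gen valid' tgt G'"
  using assms(1)
  by induction (use assms(2,3) in \<open>blast intro: ideal_gen.intros\<close>)+

lemma amult_pvec_left_in_path_alg: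
  assumes x: "x \<in> path_alg valid" and q: "valid q"
    and comp: "\<And>q p. valid q \<Longrightarrow> valid p \<Longrightarrow> ptgt tgt p = fst q \<Longrightarrow> valid (pcomp q p)"
  shows "amult tgt (pvec q) x \<in> path_alg valid"
proof -
  have "{u. amult tgt (pvec q) x u \<noteq> 0} \<subseteq> pcomp q ` {p. x p \<noteq> 0}"
    using amult_pvec_left_nonzeroD by blast
  then have "finite {u. amult tgt (pvec q) x u \<noteq> 0}"
    using x finite_subset by (auto simp: path_alg_def)
  moreover have "valid u" if "amult tgt (pvec q) x u \<noteq> 0" for u
    using amult_pvec_left_nonzeroD[OF that] x comp[OF q] by (auto simp: path_alg_def)
  ultimately show ?thesis by (simp add: path_alg_def)
qed

lemma amult_pvec_right_in_path_alg:
  assumes x: "x \<in> path_alg valid" and r: "valid r"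
    and comp: "\<And>q p. valid q \<Longrightarrow> valid p \<Longrightarrow> ptgt tgt p = fst q \<Longrightarrow> valid (pcomp q p)"
  shows "amult tgt x (pvec r) \<in> path_alg valid"
proof -
  have "{u. amult tgt x (pvec r) u \<noteq> 0} \<subseteq> (\<lambda>p. pcomp p r) ` {p. x p \<noteq> 0}"
    using amult_pvec_right_nonzeroD by blast
  then have "finite {u. amult tgt x (pvec r) u \<noteq> 0}"
    using x finite_subset by (auto simp: path_alg_def)
  moreover have "valid u" if "amult tgt x (pvec r) u \<noteq> 0" for u
    using amult_pvec_right_nonzeroD[OF that] x comp[OF _ r] by (auto simp: path_alg_def)
  ultimately show ?thesis by (simp add: path_alg_def)
qed

lemma ideal_gen_subset_path_alg:
  assumes "x \<in> ideal_gen valid tgt G" "G \<subseteq> path_alg valid"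
    and comp: "\<And>q p. valid q \<Longrightarrow> valid p \<Longrightarrow> ptgt tgt p = fst q \<Longrightarrow> valid (pcomp q p)"
  shows "x \<in> path_alg valid"
  using assms(1)
proof induction
  case (add x y)
  then show ?case
    unfolding path_alg_def using finite_support_add[of x y] by (simp, metis add.right_neutral)
next
  case (smult x c)
  then show ?case by (auto simp: path_alg_def finite_support_smult)
next
  case (lmult x q)
  then show ?case using amult_pvec_left_in_path_alg comp by blast
next
  case (rmult x r)
  then show ?case using amult_pvec_right_in_path_alg comp by blast
qed (use assms(2) in auto)

section \<open>Linear extensions and uniqueness of reductions\<close>

definition lin_ext :: "('p \<Rightarrow> 'k::field) \<Rightarrow> ('p \<Rightarrow> 'k) \<Rightarrow> 'k" where
  "lin_ext F x = (\<Sum>p\<in>{p. x p \<noteq> 0}. x p * F p)"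

lemma lin_ext_superset:
  "finite S \<Longrightarrow> {p. x p \<noteq> 0} \<subseteq> S \<Longrightarrow> lin_ext F x = (\<Sum>p\<in>S. x p * F p)"
  unfolding lin_ext_def by (rule sum.mono_neutral_left) auto

lemma lin_ext_add:
  assumes "finite {p. x p \<noteq> 0}" "finite {p. y p \<noteq> 0}"
  shows "lin_ext F (\<lambda>p. x p + y p) = lin_ext F x + lin_ext F y"
proof -
  let ?S = "{p. x p \<noteq> 0} \<union> {p. y p \<noteq> 0}"
  have "finite ?S" using assms by simp
  then have "lin_ext F (\<lambda>p. x p + y p) = (\<Sum>p\<in>?S. x p * F p) + (\<Sum>p\<in>?S. y p * F p)"
    by (subst lin_ext_superset) (auto simp: distrib_right sum.distrib)
  also have "\<dots> = lin_ext F x + lin_ext F y"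
    using \<open>finite ?S\<close> by (subst (1 2) lin_ext_superset[of ?S]) auto
  finally show ?thesis .
qed

lemma lin_ext_smult:
  "finite {p. x p \<noteq> 0} \<Longrightarrow> lin_ext F (\<lambda>p. c * x p) = c * lin_ext F x"
  by (subst lin_ext_superset[of "{p. x p \<noteq> 0}"])
    (auto simp: lin_ext_def sum_distrib_left mult.assoc)

lemma lin_ext_diff:
  assumes "finite {p. x p \<noteq> 0}" "finite {p. y p \<noteq> 0}"
  shows "lin_ext F (\<lambda>p. x p - y p) = lin_ext F x - lin_ext F y"
  using lin_ext_add[OF assms(1) finite_support_smult[OF assms(2)], of F "-1"]
    lin_ext_smult[OF assms(2), of F "-1"] by simp

lemma lin_ext_pvec [simp]: "lin_ext F (pvec a) = F a"
  by (subst lin_ext_superset[of "{a}"]) (auto simp: pvec_def)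

lemma lin_ext_zero [simp]: "lin_ext F (\<lambda>_. 0) = 0"
  by (simp add: lin_ext_def)

lemma lin_ext_cong: "(\<And>p. x p \<noteq> 0 \<Longrightarrow> F p = G p) \<Longrightarrow> lin_ext F x = lin_ext G x"
  unfolding lin_ext_def by (rule sum.cong) auto

lemma lin_ext_eq_0: "(\<And>p. x p \<noteq> 0 \<Longrightarrow> F p = 0) \<Longrightarrow> lin_ext F x = 0"
  unfolding lin_ext_def by (rule sum.neutral) auto

lemma lin_ext_pvec_eval:
  assumes "finite {p. f p \<noteq> 0}"
  shows "lin_ext (\<lambda>p. pvec p u) f = (f u :: 'k::field)"
proof -
  have "lin_ext (\<lambda>p. pvec p u) f = (\<Sum>p\<in>insert u {p. f p \<noteq> 0}. f p * pvec p u)"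
    using assms by (intro lin_ext_superset) auto
  also have "\<dots> = (\<Sum>p\<in>insert u {p. f p \<noteq> 0}. if p = u then f u else 0)"
    by (rule sum.cong) (auto simp: pvec_def)
  finally show ?thesis
    using assms by simp
qed

lemma lin_ext_add_pvec_diff:
  assumes "finite {p. f p \<noteq> 0}"
  shows "lin_ext F (\<lambda>x. f x + c * (pvec a x - pvec b x)) = lin_ext F f + c * (F a - F b :: 'k::field)"
proof -
  have fin: "finite {x. (pvec a x :: 'k) - pvec b x \<noteq> 0}"
    by (rule finite_support_diff[OF finite_support_pvec finite_support_pvec])
  have "lin_ext F (\<lambda>x. f x + c * (pvec a x - pvec b x)) =
      lin_ext F f + c * lin_ext F (\<lambda>x. pvec a x - pvec b x)"
    by (simp add: lin_ext_add[OF assms finite_support_smult[OF fin]] lin_ext_smult[OF fin])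
  then show ?thesis
    by (simp add: lin_ext_diff[OF finite_support_pvec finite_support_pvec])
qed

lemma lin_ext_add_pvec_neg:
  assumes "finite {p. f p \<noteq> 0}"
  shows "lin_ext F (\<lambda>x. f x + c * (0 - pvec b x)) = lin_ext F f - c * (F b :: 'k::field)"
proof -
  have "(\<lambda>x. f x + c * (0 - pvec b x)) = (\<lambda>x. f x - c * pvec b x)" by simp
  then show ?thesis
    by (simp add: lin_ext_diff[OF assms finite_support_smult[OF finite_support_pvec]]
        lin_ext_smult[OF finite_support_pvec])
qed

lemma lin_ext_reindex:
  assumes fin: "finite {p. x p \<noteq> 0}"
    and inj: "inj_on g {p. x p \<noteq> 0 \<and> C p}"
    and supp: "\<And>u. y u \<noteq> 0 \<Longrightarrow> \<exists>p. C p \<and> u = g p \<and> x p \<noteq> 0"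
    and val: "\<And>p. C p \<Longrightarrow> y (g p) = x p"
  shows "lin_ext F y = lin_ext (\<lambda>p. if C p then F (g p) else 0) x"
proof -
  let ?A = "{p. x p \<noteq> 0 \<and> C p}"
  have "{u. y u \<noteq> 0} = g ` ?A"
  proof (intro equalityI subsetI)
    fix u
    assume "u \<in> {u. y u \<noteq> 0}"
    then show "u \<in> g ` ?A" using supp by blast
  qed (use val in auto)
  then have "lin_ext F y = (\<Sum>p\<in>?A. y (g p) * F (g p))"
    unfolding lin_ext_def using sum.reindex[OF inj, of "\<lambda>u. y u * F u"] by simp
  also have "\<dots> = (\<Sum>p\<in>?A. x p * F (g p))"
    by (rule sum.cong) (simp_all add: val)
  also have "\<dots> = (\<Sum>p\<in>{p. x p \<noteq> 0}. x p * (if C p then F (g p) else 0))"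
  proof -
    have "?A = {p \<in> {p. x p \<noteq> 0}. C p}" by auto
    then show ?thesis using sum.inter_filter[OF fin, of "\<lambda>p. x p * F (g p)" C]
      by (simp add: if_distrib cong: if_cong)
  qed
  finally show ?thesis unfolding lin_ext_def .
qed

lemma finite_support_reindex:
  assumes "finite {p. x p \<noteq> 0}" "\<And>u. y u \<noteq> 0 \<Longrightarrow> \<exists>p. u = g p \<and> x p \<noteq> 0"
  shows "finite {u. y u \<noteq> 0}"
proof (rule finite_subset)
  show "{u. y u \<noteq> 0} \<subseteq> g ` {p. x p \<noteq> 0}" using assms(2) by blast
qed (use assms(1) in simp)

lemma lin_ext_minus_in_ideal_gen:
  fixes N :: "('x,'a) path \<Rightarrow> ('x,'a) path \<Rightarrow> 'k::field"
  assumes N: "\<And>p. valid p \<Longrightarrow> (\<lambda>u. pvec p u - N p u) \<in> ideal_gen valid tgt G"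
    and f: "f \<in> path_alg valid"
  shows "(\<lambda>u. f u - lin_ext (\<lambda>p. N p u) f) \<in> ideal_gen valid tgt G"
proof -
  let ?S = "{p. f p \<noteq> 0}"
  have fin: "finite ?S" and valid: "\<And>p. p \<in> ?S \<Longrightarrow> valid p"
    using f by (auto simp: path_alg_def)
  have "(\<lambda>u. \<Sum>p\<in>?S. f p * (pvec p u - N p u)) \<in> ideal_gen valid tgt G"
    using N valid by (intro ideal_gen_sum[OF fin]) blast
  moreover have "(\<Sum>p\<in>?S. f p * (pvec p u - N p u)) = f u - lin_ext (\<lambda>p. N p u) f" for u
    using lin_ext_pvec_eval[OF fin, of u]
    by (simp add: lin_ext_def right_diff_distrib sum_subtractf)
  ultimately show ?thesis by simp
qed

lemma reduction_unique_if_invariant: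
  fixes N :: "(('x,'a) path \<Rightarrow> 'k::field) \<Rightarrow> ('x,'a) path \<Rightarrow> 'k"
    and \<mu> :: "(('x,'a) path \<Rightarrow> 'k) \<Rightarrow> nat"
  assumes step: "\<And>f g. P f \<Longrightarrow> red_step valid tgt R f g \<Longrightarrow> P g \<and> \<mu> g < \<mu> f \<and> N g = N f"
    and normal: "\<And>f. P f \<Longrightarrow> (\<forall>u. f u \<noteq> 0 \<longrightarrow> irreducible_path R u) \<Longrightarrow> N f = f"
    and start: "P (pvec p)"
  shows "reduction_unique valid tgt R p"
proof -
  have "\<not> (\<exists>c. c 0 = pvec p \<and> (\<forall>n. red_step valid tgt R (c n) (c (Suc n))))"
  proof
    assume "\<exists>c. c 0 = pvec p \<and> (\<forall>n. red_step valid tgt R (c n) (c (Suc n)))"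
    then obtain c where "c 0 = pvec p" and steps: "\<And>n. red_step valid tgt R (c n) (c (Suc n))"
      by blast
    have "P (c n) \<and> \<mu> (c n) + n \<le> \<mu> (c 0)" for n
    proof (induction n)
      case (Suc n)
      with step[OF _ steps[of n]] show ?case by fastforce
    qed (use start \<open>c 0 = pvec p\<close> in simp)
    from this[of "Suc (\<mu> (c 0))"] show False by simp
  qed
  moreover have "P g \<and> N g = N (pvec p)" if "(red_step valid tgt R)\<^sup>*\<^sup>* (pvec p) g" for g
    using that
  proof (induction rule: rtranclp_induct)
    case (step g g')
    then show ?case using assms(1) by metis
  qed (use start in simp)
  ultimately show ?thesis
    unfolding reduction_unique_def using normal by (metis (no_types, lifting))
qed

section \<open>Bipartite Brauer graphs\<close>

locale bipartite_brauer_graph =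
  fixes V :: "'v set" and H :: "'h set" and s :: "'h \<Rightarrow> 'v" and \<iota> \<rho> :: "'h \<Rightarrow> 'h"
    and m :: "'v \<Rightarrow> nat" and V1 V2 :: "'v set"
  assumes brauer: "brauer_graph V H s \<iota> \<rho> m"
    and bip: "bipartition V H s \<iota> V1 V2"
begin

abbreviation \<sigma> where "\<sigma> \<equiv> bsigma H \<rho>"

lemma ribbon: "ribbon_graph V H s \<iota> \<rho>"
  using brauer by (simp add: brauer_graph_def)

lemma finite_H: "finite H"
  using ribbon by (simp add: ribbon_graph_def)

lemma iota_in_H: "h \<in> H \<Longrightarrow> \<iota> h \<in> H"
  using ribbon by (simp add: ribbon_graph_def)

lemma iota_neq: "h \<in> H \<Longrightarrow> \<iota> h \<noteq> h"
  using ribbon by (simp add: ribbon_graph_def)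

lemma iota_iota [simp]: "h \<in> H \<Longrightarrow> \<iota> (\<iota> h) = h"
  using ribbon by (simp add: ribbon_graph_def)

lemma bij_rho: "bij_betw \<rho> H H"
  using ribbon by (simp add: ribbon_graph_def)

lemma rho_in_H: "h \<in> H \<Longrightarrow> \<rho> h \<in> H"
  using bij_rho by (meson bij_betwE)

lemma inj_rho: "inj_on \<rho> H"
  using bij_rho by (simp add: bij_betw_def)

lemma s_eq_iff_rho_orbit: "h \<in> H \<Longrightarrow> h' \<in> H \<Longrightarrow> s h = s h' \<longleftrightarrow> (\<exists>n. (\<rho> ^^ n) h = h')"
  using ribbon by (simp add: ribbon_graph_def)

lemma s_rho [simp]: "h \<in> H \<Longrightarrow> s (\<rho> h) = s h"
  using s_eq_iff_rho_orbit[of h "\<rho> h"] rho_in_H by (metis funpow_0 funpow_Suc_right o_apply)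

lemma m_pos: "h \<in> H \<Longrightarrow> m (s h) > 0"
  using brauer ribbon by (auto simp: brauer_graph_def ribbon_graph_def)

lemma sigma_in_H: "h \<in> H \<Longrightarrow> \<sigma> h \<in> H"
  unfolding bsigma_def by (metis bij_betw_def inv_into_into bij_rho)

lemma rho_sigma [simp]: "h \<in> H \<Longrightarrow> \<rho> (\<sigma> h) = h"
  unfolding bsigma_def by (metis bij_betw_def f_inv_into_f bij_rho)

lemma sigma_rho [simp]: "h \<in> H \<Longrightarrow> \<sigma> (\<rho> h) = h"
  unfolding bsigma_def by (simp add: inv_into_f_f inj_rho)

lemma s_sigma [simp]: "h \<in> H \<Longrightarrow> s (\<sigma> h) = s h"
  by (metis rho_sigma s_rho sigma_in_H)

lemma V1_V2_disjoint: "v \<in> V1 \<Longrightarrow> v \<notin> V2"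
  using bip by (auto simp: bipartition_def)

lemma s_in_V1_or_V2: "h \<in> H \<Longrightarrow> s h \<in> V1 \<or> s h \<in> V2"
  using bip by (auto simp: bipartition_def)

lemma s_iota_in_V2: "h \<in> H \<Longrightarrow> s h \<in> V1 \<Longrightarrow> s (\<iota> h) \<in> V2"
  using bip by (auto simp: bipartition_def)

lemma s_iota_in_V1: "h \<in> H \<Longrightarrow> s h \<in> V2 \<Longrightarrow> s (\<iota> h) \<in> V1"
  using bip by (auto simp: bipartition_def)

lemma rho_funpow_in_H: "h \<in> H \<Longrightarrow> (\<rho> ^^ n) h \<in> H"
  by (induction n) (auto simp: rho_in_H)

lemma sigma_funpow_in_H: "h \<in> H \<Longrightarrow> (\<sigma> ^^ n) h \<in> H"
  by (induction n) (auto simp: sigma_in_H)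

lemma s_rho_funpow [simp]: "h \<in> H \<Longrightarrow> s ((\<rho> ^^ n) h) = s h"
  by (induction n) (auto simp: rho_funpow_in_H)

lemma s_sigma_funpow [simp]: "h \<in> H \<Longrightarrow> s ((\<sigma> ^^ n) h) = s h"
  by (induction n) (auto simp: sigma_funpow_in_H)

lemma rho_funpow_sigma_funpow: "h \<in> H \<Longrightarrow> (\<rho> ^^ n) ((\<sigma> ^^ n) h) = h"
proof (induction n arbitrary: h)
  case (Suc n)
  have "(\<rho> ^^ Suc n) ((\<sigma> ^^ Suc n) h) = (\<rho> ^^ n) (\<rho> (\<sigma> ((\<sigma> ^^ n) h)))"
    by (simp add: funpow_swap1)
  also have "\<dots> = h" using Suc by (simp add: sigma_funpow_in_H)
  finally show ?case .
qed simp

lemma rho_funpow_cancel: "a \<in> H \<Longrightarrow> b \<in> H \<Longrightarrow> (\<rho> ^^ i) a = (\<rho> ^^ i) b \<Longrightarrow> a = b"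
  by (induction i) (use inj_rho rho_funpow_in_H in \<open>auto simp: inj_on_def\<close>)

lemma rho_periodic: assumes h: "h \<in> H" shows "\<exists>d>0. (\<rho> ^^ d) h = h"
proof -
  let ?f = "\<lambda>k. (\<rho> ^^ k) h"
  have "?f ` {0..card H} \<subseteq> H" using h rho_funpow_in_H by auto
  then have "card (?f ` {0..card H}) < card {0..card H}"
    using card_mono[OF finite_H] by (simp add: le_imp_less_Suc)
  then have "\<not> inj_on ?f {0..card H}" by (rule pigeonhole)
  then obtain i j where "i \<noteq> j" "(\<rho> ^^ i) h = (\<rho> ^^ j) h"
    unfolding inj_on_def by blast
  moreover have "\<exists>d>0. (\<rho> ^^ d) h = h" if "i < j" "(\<rho> ^^ i) h = (\<rho> ^^ j) h" for i j
  proof -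
    have "(\<rho> ^^ i) ((\<rho> ^^ (j - i)) h) = (\<rho> ^^ i) h"
      using that by (metis funpow_add le_add_diff_inverse less_imp_le_nat o_apply)
    then have "(\<rho> ^^ (j - i)) h = h"
      using rho_funpow_cancel rho_funpow_in_H h by blast
    with \<open>i < j\<close> show ?thesis by (intro exI[of _ "j - i"]) auto
  qed
  ultimately show ?thesis by (metis linorder_neqE_nat)
qed

lemma rho_orbit_eq: "h \<in> H \<Longrightarrow> {h' \<in> H. s h' = s h} = range (\<lambda>n. (\<rho> ^^ n) h)"
proof (intro equalityI subsetI)
  fix x assume "h \<in> H" "x \<in> {h' \<in> H. s h' = s h}"
  then show "x \<in> range (\<lambda>n. (\<rho> ^^ n) h)" using s_eq_iff_rho_orbit[of h x] by auto
qed (auto simp: rho_funpow_in_H)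

lemma rho_funpow_valency: assumes h: "h \<in> H" shows "(\<rho> ^^ valency H s (s h)) h = h"
proof -
  define d where "d = (LEAST d. 0 < d \<and> (\<rho> ^^ d) h = h)"
  have d: "0 < d" "(\<rho> ^^ d) h = h"
    using LeastI_ex[OF rho_periodic[OF h]] unfolding d_def by auto
  have "range (\<lambda>n. (\<rho> ^^ n) h) = (\<lambda>k. (\<rho> ^^ k) h) ` {0..<d}"
  proof (intro equalityI subsetI)
    fix x assume "x \<in> range (\<lambda>n. (\<rho> ^^ n) h)"
    then obtain n where "x = (\<rho> ^^ n) h" by blast
    then show "x \<in> (\<lambda>k. (\<rho> ^^ k) h) ` {0..<d}"
      using funpow_mod_eq[of d \<rho> h n] d by (intro image_eqI[of _ _ "n mod d"]) auto
  qed auto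
  moreover have "inj_on (\<lambda>k. (\<rho> ^^ k) h) {0..<d}"
    by (rule inj_on_funpow_least) (use d not_less_Least in \<open>auto simp: d_def\<close>)
  ultimately have "valency H s (s h) = d"
    unfolding valency_def using rho_orbit_eq[OF h] by (simp add: card_image)
  with d show ?thesis by simp
qed

lemma valency_pos: "h \<in> H \<Longrightarrow> valency H s (s h) > 0"
  unfolding valency_def using finite_H by (auto simp: card_gt_0_iff)

lemma sigma_funpow_valency: assumes h: "h \<in> H" shows "(\<sigma> ^^ valency H s (s h)) h = h"
proof -
  let ?y = "(\<sigma> ^^ valency H s (s h)) h"
  have "?y \<in> H" "s ?y = s h" using h sigma_funpow_in_H by auto
  then have "(\<rho> ^^ valency H s (s h)) ?y = ?y" using rho_funpow_valency by metis
  with rho_funpow_sigma_funpow[OF h] show ?thesis by simp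
qed

text \<open>Arrow lists along which all length-two subpaths are of the form \<open>\<alpha>\<^sub>h \<sigma>(\<alpha>\<^sub>h)\<close>,
  i.e. the subpaths of the powers of the special cycles.\<close>

definition rho_chain :: "'h list \<Rightarrow> bool" where
  "rho_chain xs \<longleftrightarrow> xs \<noteq> [] \<and> set xs \<subseteq> H \<and> successively (\<lambda>a b. a = \<rho> b) xs"

lemma rho_chain_nth:
  assumes "rho_chain xs" "i < length xs"
  shows "xs ! i = (\<rho> ^^ (length xs - Suc i)) (last xs)"
proof -
  have "successively (\<lambda>a b. a = \<rho> b) xs" using assms(1) by (simp add: rho_chain_def)
  then show ?thesis using assms(2)
  proof (induction xs arbitrary: i)
    case (Cons x xs)
    show ?case
    proof (cases xs)
      case (Cons y ys)
      with Cons.prems Cons.IH[of 0] Cons.IH[of "i - 1"] show ?thesis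
        by (cases i) (auto simp: successively_Cons funpow_swap1 Suc_diff_Suc)
    qed (use Cons.prems in simp)
  qed simp
qed

lemma rho_chain_in_H: "rho_chain xs \<Longrightarrow> x \<in> set xs \<Longrightarrow> x \<in> H"
  unfolding rho_chain_def by blast

lemma rho_chain_last_in_H: "rho_chain xs \<Longrightarrow> last xs \<in> H"
  using rho_chain_in_H by (auto simp: rho_chain_def)

lemma rho_chain_eqI:
  assumes "rho_chain xs" "rho_chain ys" "length xs = length ys" "last xs = last ys"
  shows "xs = ys"
  using assms by (intro nth_equalityI) (simp_all add: rho_chain_nth)

lemma s_rho_chain: "rho_chain xs \<Longrightarrow> x \<in> set xs \<Longrightarrow> s x = s (last xs)"
  by (metis in_set_conv_nth rho_chain_last_in_H rho_chain_nth s_rho_funpow)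

lemma rho_chain_infix: "rho_chain (a @ b @ c) \<Longrightarrow> b \<noteq> [] \<Longrightarrow> rho_chain b"
  by (simp add: rho_chain_def successively_append_iff)

lemma rho_chain_suffix: "rho_chain (a @ b) \<Longrightarrow> b \<noteq> [] \<Longrightarrow> rho_chain b"
  using rho_chain_infix[of a b "[]"] by simp

lemma rho_chain_append:
  "rho_chain xs \<Longrightarrow> rho_chain ys \<Longrightarrow> last xs = \<rho> (hd ys) \<Longrightarrow> rho_chain (xs @ ys)"
  by (simp add: rho_chain_def successively_append_iff)

lemma rho_chain_pair: "rho_chain (a @ [x, y] @ c) \<Longrightarrow> x = \<rho> y"
  by (simp add: rho_chain_def successively_append_iff)

lemma rho_chain_single: "h \<in> H \<Longrightarrow> rho_chain [h]"
  by (simp add: rho_chain_def)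

lemma not_rho_chainE:
  assumes "xs \<noteq> []" "set xs \<subseteq> H" "\<not> rho_chain xs"
  obtains a x y c where "xs = a @ [x, y] @ c" "x \<noteq> \<rho> y"
proof -
  obtain i where i: "Suc i < length xs" "xs ! i \<noteq> \<rho> (xs ! Suc i)"
    using assms by (auto simp: rho_chain_def successively_iff_nth)
  then have "xs = take i xs @ [xs ! i, xs ! Suc i] @ drop (Suc (Suc i)) xs"
    by (simp add: id_take_nth_drop Cons_nth_drop_Suc)
  with i that show ?thesis by blast
qed

lemma rho_chain_drop_suffix:
  assumes "rho_chain xs" "0 < length ys" "length ys \<le> length xs" "rho_chain ys" "last ys = last xs"
  shows "xs = take (length xs - length ys) xs @ ys"
proof -
  let ?d = "drop (length xs - length ys) xs"
  have "length xs - length ys < length xs" using assms(2,3) by linarith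
  then have "?d \<noteq> []" by simp
  then have "rho_chain ?d"
    using rho_chain_suffix[of "take (length xs - length ys) xs" ?d] assms(1) by simp
  moreover have "last ?d = last xs" using \<open>length xs - length ys < length xs\<close> by simp
  moreover have "length ?d = length ys" using assms(3) by simp
  ultimately have "?d = ys" using rho_chain_eqI assms(4,5) by metis
  then show ?thesis by (metis append_take_drop_id)
qed

lemma length_cyc_at [simp]: "length (cyc_at H s \<rho> h) = valency H s (s h)"
  by (simp add: cyc_at_def)

lemma cyc_at_nth: "i < valency H s (s h) \<Longrightarrow> cyc_at H s \<rho> h ! i = (\<sigma> ^^ Suc i) h"
  by (simp add: cyc_at_def)

lemma cyc_at_nonempty: "h \<in> H \<Longrightarrow> cyc_at H s \<rho> h \<noteq> []"
  using valency_pos[of h] by (auto simp: cyc_at_def)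

lemma rho_chain_cyc_at: assumes h: "h \<in> H" shows "rho_chain (cyc_at H s \<rho> h)"
  unfolding rho_chain_def successively_iff_nth
proof (intro conjI allI impI)
  show "set (cyc_at H s \<rho> h) \<subseteq> H"
    unfolding cyc_at_def using h sigma_funpow_in_H[of h] by (auto simp del: funpow.simps)
  fix i assume "Suc i < length (cyc_at H s \<rho> h)"
  moreover have "(\<sigma> ^^ Suc (Suc i)) h = \<sigma> ((\<sigma> ^^ Suc i) h)" by simp
  ultimately show "cyc_at H s \<rho> h ! i = \<rho> (cyc_at H s \<rho> h ! Suc i)"
    using h sigma_funpow_in_H[of h "Suc i"] by (simp add: cyc_at_nth del: funpow.simps)
qed (rule cyc_at_nonempty[OF h])

lemma last_cyc_at: "h \<in> H \<Longrightarrow> last (cyc_at H s \<rho> h) = h"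
  using cyc_at_nonempty[of h] valency_pos[of h] sigma_funpow_valency[of h]
  by (simp add: last_conv_nth cyc_at_nth del: funpow.simps)

lemma hd_cyc_at: "h \<in> H \<Longrightarrow> hd (cyc_at H s \<rho> h) = \<sigma> h"
  using cyc_at_nonempty[of h] valency_pos[of h] by (simp add: hd_conv_nth cyc_at_nth)

lemma ppow_Suc: "ppow c (Suc k) = c @ ppow c k"
  by (simp add: ppow_def)

lemma length_ppow: "length (ppow c k) = k * length c"
  by (induction k) (simp_all add: ppow_def)

lemma rho_chain_ppow_cyc_at:
  assumes h: "h \<in> H" and k: "k > 0"
  shows "rho_chain (ppow (cyc_at H s \<rho> h) k) \<and> last (ppow (cyc_at H s \<rho> h) k) = h \<and>
         hd (ppow (cyc_at H s \<rho> h) k) = \<sigma> h"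
  using k
proof (induction k)
  case (Suc k)
  let ?c = "cyc_at H s \<rho> h"
  show ?case
  proof (cases "k = 0")
    case False
    with Suc have IH: "rho_chain (ppow ?c k)" "last (ppow ?c k) = h" "hd (ppow ?c k) = \<sigma> h"
      by auto
    have "rho_chain (?c @ ppow ?c k)"
      using rho_chain_append[OF rho_chain_cyc_at[OF h] IH(1)] IH(3) last_cyc_at[OF h] h by simp
    with IH show ?thesis
      using cyc_at_nonempty[OF h] hd_cyc_at[OF h] by (auto simp: ppow_Suc rho_chain_def)
  qed (use rho_chain_cyc_at[OF h] last_cyc_at[OF h] hd_cyc_at[OF h] in \<open>simp add: ppow_def\<close>)
qed simp

definition cycle_length :: "'v \<Rightarrow> nat" where
  "cycle_length v = m v * valency H s v"

definition cyc_pow :: "'h \<Rightarrow> 'h list" where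
  "cyc_pow h = ppow (cyc_at H s \<rho> h) (m (s h))"

definition cyc_pow_arrow :: "'h \<Rightarrow> 'h list" where
  "cyc_pow_arrow h = ppow (cyc_at H s \<rho> (\<rho> h)) (m (s h)) @ [h]"

lemma cycle_length_pos: "h \<in> H \<Longrightarrow> cycle_length (s h) > 0"
  using m_pos valency_pos by (simp add: cycle_length_def)

lemma cycle_length_truncated: "truncated H s m v \<Longrightarrow> cycle_length v = 1"
  by (simp add: truncated_def cycle_length_def)

lemma cycle_length_not_truncated:
  assumes "h \<in> H" "\<not> truncated H s m (s h)"
  shows "cycle_length (s h) \<ge> 2"
proof -
  have "m (s h) \<ge> 1" "valency H s (s h) \<ge> 1"
    using m_pos valency_pos assms(1) by (auto simp: Suc_le_eq)
  moreover have "m (s h) \<noteq> 1 \<or> valency H s (s h) \<noteq> 1"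
    using assms(2) by (simp add: truncated_def)
  ultimately show ?thesis
    unfolding cycle_length_def by (metis One_nat_def Suc_1 le_antisym mult_le_mono not_less_eq_eq
        mult.right_neutral mult_1)
qed

lemma
  assumes "h \<in> H"
  shows rho_chain_cyc_pow: "rho_chain (cyc_pow h)"
    and last_cyc_pow: "last (cyc_pow h) = h"
    and hd_cyc_pow: "hd (cyc_pow h) = \<sigma> h"
    and length_cyc_pow: "length (cyc_pow h) = cycle_length (s h)"
  using rho_chain_ppow_cyc_at[OF assms m_pos[OF assms]]
  by (simp_all add: cyc_pow_def cycle_length_def length_ppow)

lemma cyc_pow_nonempty: "h \<in> H \<Longrightarrow> cyc_pow h \<noteq> []"
  using rho_chain_cyc_pow by (simp add: rho_chain_def)

lemma s_cyc_pow: "h \<in> H \<Longrightarrow> x \<in> set (cyc_pow h) \<Longrightarrow> s x = s h"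
  using s_rho_chain[OF rho_chain_cyc_pow] last_cyc_pow by simp

lemma cyc_pow_arrow_eq: "h \<in> H \<Longrightarrow> cyc_pow_arrow h = cyc_pow (\<rho> h) @ [h]"
  by (simp add: cyc_pow_arrow_def cyc_pow_def rho_in_H)

lemma
  assumes "h \<in> H"
  shows rho_chain_cyc_pow_arrow: "rho_chain (cyc_pow_arrow h)"
    and last_cyc_pow_arrow: "last (cyc_pow_arrow h) = h"
    and length_cyc_pow_arrow: "length (cyc_pow_arrow h) = Suc (cycle_length (s h))"
  using rho_chain_append[OF rho_chain_cyc_pow rho_chain_single] last_cyc_pow length_cyc_pow
    rho_in_H[OF assms] assms by (simp_all add: cyc_pow_arrow_eq)

lemma s_cyc_pow_arrow: "h \<in> H \<Longrightarrow> x \<in> set (cyc_pow_arrow h) \<Longrightarrow> s x = s h"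
  using s_rho_chain[OF rho_chain_cyc_pow_arrow] last_cyc_pow_arrow by simp

section \<open>The reduction system \<open>R\<^sub>\<Gamma>\<close>\<close>

abbreviation "srcQ \<equiv> bsrc \<iota>"
abbreviation "tgtQ \<equiv> btgt \<iota> \<rho>"
abbreviation "arrows' \<equiv> arrowsQ' H s m V1"
abbreviation "RG \<equiv> R_Gamma H s \<iota> \<rho> m V1 V2"

abbreviation qvalid :: "'h set \<Rightarrow> ('h set, 'h) path \<Rightarrow> bool" where
  "qvalid A \<equiv> valid_path (edges H \<iota>) A srcQ tgtQ"

lemma validQ_eq: "validQ H \<iota> \<rho> = qvalid H"
  by (simp add: validQ_def)

lemma validQ'_eq: "validQ' H s \<iota> \<rho> m V1 = qvalid arrows'"
  by (simp add: validQ'_def)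

lemma bsrc_in_edges: "h \<in> H \<Longrightarrow> srcQ h \<in> edges H \<iota>"
  by (auto simp: bsrc_def edges_def)

lemma btgt_in_edges: "h \<in> H \<Longrightarrow> tgtQ h \<in> edges H \<iota>"
  using rho_in_H by (auto simp: btgt_def edges_def)

lemma bsrc_iota: "h \<in> H \<Longrightarrow> srcQ (\<iota> h) = srcQ h"
  by (auto simp: bsrc_def)

lemma btgt_eq_bsrc_rho: "tgtQ h = srcQ (\<rho> h)"
  by (simp add: btgt_def bsrc_def)

lemma arrows'_subset_H: "arrows' \<subseteq> H"
  by (auto simp: arrowsQ'_def)

lemma in_arrows'I: "h \<in> H \<Longrightarrow> (s h \<in> V1 \<Longrightarrow> \<not> truncated H s m (s h)) \<Longrightarrow> h \<in> arrows'"
  by (auto simp: arrowsQ'_def)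

lemma not_truncated_if_in_arrows': "h \<in> arrows' \<Longrightarrow> s h \<in> V1 \<Longrightarrow> \<not> truncated H s m (s h)"
  by (auto simp: arrowsQ'_def)

lemma qvalid_mono: "A \<subseteq> B \<Longrightarrow> qvalid A p \<Longrightarrow> qvalid B p"
  by (auto simp: valid_path_def)

lemma ball_btgt_in_edges: "A \<subseteq> H \<Longrightarrow> \<forall>a\<in>A. tgtQ a \<in> edges H \<iota>"
  using btgt_in_edges by blast

lemma qvalid_mkP_rho_chain: "rho_chain xs \<Longrightarrow> set xs \<subseteq> A \<Longrightarrow> qvalid A (mkP \<iota> xs)"
  using rho_chain_last_in_H[of xs]
  by (auto simp: valid_path_iff mkP_def rho_chain_def bsrc_in_edges btgt_eq_bsrc_rho
      elim: successively_mono)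

lemma qvalid_mkP_pair: "A \<subseteq> H \<Longrightarrow> a \<in> A \<Longrightarrow> b \<in> A \<Longrightarrow> tgtQ b = srcQ a \<Longrightarrow> qvalid A (mkP \<iota> [a, b])"
  by (auto simp: valid_path_iff mkP_def intro: bsrc_in_edges)

lemma qvalid_adjacent: "qvalid A (x, ql @ [a, b] @ rl) \<Longrightarrow> tgtQ b = srcQ a"
  by (simp add: valid_path_iff successively_append_iff)

lemma qvalid_eq_mkP: "qvalid A p \<Longrightarrow> snd p \<noteq> [] \<Longrightarrow> p = mkP \<iota> (snd p)"
  by (cases p) (simp add: valid_path_def mkP_def)

lemma set_cyc_pow_subset:
  "h \<in> H \<Longrightarrow> (s h \<in> V1 \<Longrightarrow> \<not> truncated H s m (s h)) \<Longrightarrow> set (cyc_pow h) \<subseteq> arrows'"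
  using rho_chain_in_H[OF rho_chain_cyc_pow] s_cyc_pow by (auto intro: in_arrows'I)

lemma set_cyc_pow_arrow_subset: "h \<in> H \<Longrightarrow> s h \<in> V2 \<Longrightarrow> set (cyc_pow_arrow h) \<subseteq> arrows'"
  using rho_chain_in_H[OF rho_chain_cyc_pow_arrow] s_cyc_pow_arrow V1_V2_disjoint
  by (auto intro: in_arrows'I)

lemma fst_mkP_cyc_pow: "h \<in> H \<Longrightarrow> fst (mkP \<iota> (cyc_pow h)) = srcQ h"
  by (simp add: mkP_def last_cyc_pow)

lemma ptgt_mkP_cyc_pow: "h \<in> H \<Longrightarrow> ptgt tgtQ (mkP \<iota> (cyc_pow h)) = srcQ h"
  by (simp add: mkP_def ptgt_def hd_cyc_pow cyc_pow_nonempty btgt_eq_bsrc_rho)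

lemma R_GammaE:
  assumes "(t, \<phi>) \<in> RG"
  obtains (cycle) h where "h \<in> H" "s h \<in> V1" "\<not> truncated H s m (s h)"
      "t = mkP \<iota> (cyc_pow h)" "\<phi> = pvec (mkP \<iota> (cyc_pow (\<iota> h)))"
  | (overlong) h where "h \<in> H" "s h \<in> V2" "t = mkP \<iota> (cyc_pow_arrow h)" "\<phi> = (\<lambda>_. 0)"
  | (pair) a b where "a \<in> arrows'" "b \<in> arrows'" "tgtQ b = srcQ a" "a \<noteq> \<rho> b"
      "t = mkP \<iota> [a, b]" "\<phi> = (\<lambda>_. 0)"
  using assms unfolding R_Gamma_def
proof (elim UnE CollectE exE conjE)
  fix a b
  assume "(t, \<phi>) = (mkP \<iota> [a, b], \<lambda>_. 0)" "a \<in> arrows'" "b \<in> arrows'"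
    "tgtQ b = srcQ a" "\<sigma> a \<noteq> b"
  moreover have "a \<noteq> \<rho> b" using \<open>b \<in> arrows'\<close> \<open>\<sigma> a \<noteq> b\<close> arrows'_subset_H by auto
  ultimately show thesis using pair by simp
qed (auto intro: cycle overlong simp: cyc_pow_def cyc_pow_arrow_def)

lemma R_Gamma_cycleI:
  "h \<in> H \<Longrightarrow> s h \<in> V1 \<Longrightarrow> \<not> truncated H s m (s h) \<Longrightarrow>
    (mkP \<iota> (cyc_pow h), pvec (mkP \<iota> (cyc_pow (\<iota> h)))) \<in> RG"
  unfolding R_Gamma_def cyc_pow_def using s_iota_in_V2 by (intro UnI1) blast

lemma R_Gamma_overlongI: "h \<in> H \<Longrightarrow> s h \<in> V2 \<Longrightarrow> (mkP \<iota> (cyc_pow_arrow h), (\<lambda>_. 0)) \<in> RG"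
  unfolding R_Gamma_def cyc_pow_arrow_def by blast

lemma R_Gamma_pairI:
  "a \<in> arrows' \<Longrightarrow> b \<in> arrows' \<Longrightarrow> tgtQ b = srcQ a \<Longrightarrow> a \<noteq> \<rho> b \<Longrightarrow> (mkP \<iota> [a, b], (\<lambda>_. 0)) \<in> RG"
proof -
  assume "a \<in> arrows'" "b \<in> arrows'" "tgtQ b = srcQ a" "a \<noteq> \<rho> b"
  moreover have "\<sigma> a \<noteq> b"
    using \<open>a \<in> arrows'\<close> \<open>a \<noteq> \<rho> b\<close> arrows'_subset_H rho_sigma by (metis subsetD)
  ultimately show ?thesis unfolding R_Gamma_def by blast
qed

text \<open>The left-hand sides of \<open>R\<^sub>\<Gamma>\<close> as arrow lists; irreducibility does not involve the
  right-hand sides, hence not the coefficient field.\<close>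

definition redex :: "'h list \<Rightarrow> bool" where
  "redex xs \<longleftrightarrow>
     (\<exists>h\<in>H. s h \<in> V1 \<and> \<not> truncated H s m (s h) \<and> xs = cyc_pow h) \<or>
     (\<exists>h\<in>H. s h \<in> V2 \<and> xs = cyc_pow_arrow h) \<or>
     (\<exists>a\<in>arrows'. \<exists>b\<in>arrows'. tgtQ b = srcQ a \<and> a \<noteq> \<rho> b \<and> xs = [a, b])"

definition irreducible :: "'h list \<Rightarrow> bool" where
  "irreducible xs \<longleftrightarrow> \<not> (\<exists>a r c. xs = a @ r @ c \<and> redex r)"

lemma R_Gamma_redex: "(t, \<phi>) \<in> RG \<Longrightarrow> t = mkP \<iota> (snd t) \<and> redex (snd t)"
  by (erule R_GammaE) (auto simp: redex_def mkP_def)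

lemma R_Gamma_if_redex: "redex xs \<Longrightarrow> \<exists>\<phi> :: _ \<Rightarrow> 'k::field. (mkP \<iota> xs, \<phi>) \<in> RG"
  unfolding redex_def using R_Gamma_cycleI R_Gamma_overlongI R_Gamma_pairI by blast

lemma irreducible_path_R_Gamma_iff:
  "irreducible_path (RG :: (_ \<times> (_ \<Rightarrow> 'k::field)) set) p \<longleftrightarrow> irreducible (snd p)"
  unfolding irreducible_path_def irreducible_def subpath_def
proof (intro iffI notI)
  assume "\<exists>a r c. snd p = a @ r @ c \<and> redex r"
  then obtain a r c where "snd p = a @ r @ c" "redex r" by blast
  moreover obtain \<phi> :: "_ \<Rightarrow> 'k" where "(mkP \<iota> r, \<phi>) \<in> RG"
    using R_Gamma_if_redex[OF \<open>redex r\<close>] by blast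
  moreover assume "\<not> (\<exists>sp\<in>(RG :: (_ \<times> (_ \<Rightarrow> 'k)) set). \<exists>a b. snd p = a @ snd (fst sp) @ b)"
  ultimately show False by (force simp: mkP_def)
next
  assume "\<exists>sp\<in>(RG :: (_ \<times> (_ \<Rightarrow> 'k)) set). \<exists>a b. snd p = a @ snd (fst sp) @ b"
  then obtain t \<phi> a b where "(t, \<phi>) \<in> (RG :: (_ \<times> (_ \<Rightarrow> 'k)) set)" "snd p = a @ snd t @ b"
    by auto
  moreover assume "\<not> (\<exists>a r c. snd p = a @ r @ c \<and> redex r)"
  ultimately show False using R_Gamma_redex by blast
qed

lemma redex_length: "redex xs \<Longrightarrow> length xs \<ge> 2"
  unfolding redex_def
  using length_cyc_pow cycle_length_not_truncated length_cyc_pow_arrow cycle_length_pos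
  by fastforce

lemma irreducible_Nil [simp]: "irreducible []"
  using redex_length by (fastforce simp: irreducible_def)

lemma redex_rho_chain:
  assumes "redex xs" "rho_chain xs"
  shows "(s (last xs) \<in> V1 \<and> length xs = cycle_length (s (last xs))) \<or>
         (s (last xs) \<in> V2 \<and> length xs = Suc (cycle_length (s (last xs))))"
  using assms rho_chain_pair[of "[]" _ _ "[]"] unfolding redex_def
  by (auto simp: last_cyc_pow length_cyc_pow last_cyc_pow_arrow length_cyc_pow_arrow)

lemma redex_not_rho_chain: "redex xs \<Longrightarrow> \<not> rho_chain xs \<Longrightarrow> length xs = 2"
  unfolding redex_def using rho_chain_cyc_pow rho_chain_cyc_pow_arrow by auto

lemma redex_infix:
  assumes "redex r" "redex (a @ r @ c)"
  shows "a = [] \<and> c = []"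
proof -
  have "r \<noteq> []" using redex_length[OF assms(1)] by auto
  have "length r = length (a @ r @ c)"
  proof (cases "rho_chain (a @ r @ c)")
    case True
    then have "rho_chain r" using rho_chain_infix \<open>r \<noteq> []\<close> by blast
    moreover have "s (last r) = s (last (a @ r @ c))"
      using s_rho_chain[OF True] \<open>r \<noteq> []\<close> by simp
    ultimately show ?thesis
      using redex_rho_chain[OF assms(1)] redex_rho_chain[OF assms(2) True] V1_V2_disjoint by auto
  next
    case False
    then show ?thesis
      using redex_not_rho_chain[OF assms(2)] redex_length[OF assms(1)] by simp
  qed
  then show ?thesis by simp
qed

definition short_chain :: "'h list \<Rightarrow> bool" where
  "short_chain xs \<longleftrightarrow> rho_chain xs \<and>
     (s (last xs) \<in> V1 \<longrightarrow> length xs < cycle_length (s (last xs))) \<and>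
     (s (last xs) \<in> V2 \<longrightarrow> length xs \<le> cycle_length (s (last xs)))"

lemma irreducible_if_short_chain:
  assumes "short_chain xs" shows "irreducible xs"
  unfolding irreducible_def
proof
  assume "\<exists>a r c. xs = a @ r @ c \<and> redex r"
  then obtain a r c where xs: "xs = a @ r @ c" and "redex r" by blast
  have "r \<noteq> []" using redex_length[OF \<open>redex r\<close>] by auto
  have chain: "rho_chain xs" using assms by (simp add: short_chain_def)
  then have "rho_chain r" using rho_chain_infix \<open>r \<noteq> []\<close> xs by blast
  moreover have "s (last r) = s (last xs)"
    using s_rho_chain[OF chain] \<open>r \<noteq> []\<close> xs by simp
  moreover have "length r \<le> length xs" using xs by simp
  ultimately show False
    using redex_rho_chain[OF \<open>redex r\<close>] assms by (auto simp: short_chain_def)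
qed

lemma short_chain_subset_arrows':
  assumes "short_chain xs" shows "set xs \<subseteq> arrows'"
proof
  fix e assume e: "e \<in> set xs"
  have chain: "rho_chain xs" using assms by (simp add: short_chain_def)
  have "e \<in> H" "s e = s (last xs)" using rho_chain_in_H[OF chain e] s_rho_chain[OF chain e] .
  moreover have "length xs \<ge> 1" using chain by (simp add: rho_chain_def Suc_le_eq)
  ultimately show "e \<in> arrows'"
    using assms cycle_length_truncated by (intro in_arrows'I) (auto simp: short_chain_def)
qed

lemma qvalid_short_chain: "short_chain xs \<Longrightarrow> qvalid arrows' (mkP \<iota> xs)"
  using qvalid_mkP_rho_chain short_chain_subset_arrows' by (simp add: short_chain_def)

lemma short_chain_cyc_pow: "h \<in> H \<Longrightarrow> s h \<in> V2 \<Longrightarrow> short_chain (cyc_pow h)"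
  using rho_chain_cyc_pow last_cyc_pow length_cyc_pow
  by (auto simp: short_chain_def dest: V1_V2_disjoint)

lemma short_chain_if_irreducible:
  assumes valid: "qvalid arrows' (x, xs)" and "xs \<noteq> []" and irr: "irreducible xs"
  shows "short_chain xs"
proof -
  have sub: "set xs \<subseteq> arrows'" using valid by (simp add: valid_path_def)
  then have "set xs \<subseteq> H" using arrows'_subset_H by blast
  have not_infix: "\<not> redex r" if "xs = a @ r @ c" for a r c
    using irr that unfolding irreducible_def by blast
  have chain: "rho_chain xs"
  proof (rule ccontr)
    assume "\<not> rho_chain xs"
    then obtain a y z c where yz: "xs = a @ [y, z] @ c" "y \<noteq> \<rho> z"
      using not_rho_chainE \<open>xs \<noteq> []\<close> \<open>set xs \<subseteq> H\<close> by blast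
    then have "redex [y, z]"
      using qvalid_adjacent[of arrows' x a y z c] valid sub unfolding redex_def by auto
    with not_infix yz(1) show False by blast
  qed
  let ?h = "last xs"
  have "?h \<in> arrows'" using sub \<open>xs \<noteq> []\<close> by auto
  then have "?h \<in> H" using arrows'_subset_H by blast
  have suffix: "\<not> redex ys" if "rho_chain ys" "last ys = ?h" "length ys \<le> length xs" for ys
    using not_infix[of _ _ "[]"] rho_chain_drop_suffix[OF chain _ that(3,1,2)] that(1)
    by (auto simp: rho_chain_def)
  show ?thesis
  proof (cases "s ?h \<in> V2")
    case True
    then have "\<not> length xs > cycle_length (s ?h)"
      using suffix[OF rho_chain_cyc_pow_arrow last_cyc_pow_arrow] \<open>?h \<in> H\<close>
      unfolding redex_def length_cyc_pow_arrow[OF \<open>?h \<in> H\<close>] by auto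
    with True chain show ?thesis by (auto simp: short_chain_def dest: V1_V2_disjoint)
  next
    case False
    then have V1: "s ?h \<in> V1" using s_in_V1_or_V2 \<open>?h \<in> H\<close> by blast
    then have "\<not> length xs \<ge> cycle_length (s ?h)"
      using suffix[OF rho_chain_cyc_pow last_cyc_pow] \<open>?h \<in> H\<close> \<open>?h \<in> arrows'\<close>
        not_truncated_if_in_arrows'
      unfolding redex_def length_cyc_pow[OF \<open>?h \<in> H\<close>] by blast
    with False chain show ?thesis by (simp add: short_chain_def)
  qed
qed

lemma R_Gamma_ruleD:
  assumes "(t, \<phi>) \<in> RG"
  shows "qvalid arrows' t" and "\<phi> \<in> path_alg (qvalid arrows')"
    and "\<phi> u \<noteq> 0 \<Longrightarrow> fst u = fst t \<and> ptgt tgtQ u = ptgt tgtQ t \<and> short_chain (snd u)"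
  using assms
proof (induction rule: R_GammaE)
  case (cycle h)
  have "\<iota> h \<in> H" "s (\<iota> h) \<in> V2" using cycle iota_in_H s_iota_in_V2 by auto
  then have short: "short_chain (cyc_pow (\<iota> h))" by (rule short_chain_cyc_pow)
  { case 1 show ?case
      using qvalid_mkP_rho_chain[OF rho_chain_cyc_pow set_cyc_pow_subset] cycle by simp }
  { case 2 show ?case
      using pvec_in_path_alg qvalid_short_chain[OF short] cycle by simp }
  { case 3
    then have "u = mkP \<iota> (cyc_pow (\<iota> h))" using cycle pvec_nonzeroD by metis
    then show ?case
      using cycle short \<open>\<iota> h \<in> H\<close> by (simp add: fst_mkP_cyc_pow ptgt_mkP_cyc_pow bsrc_iota) }
next
  case (overlong h)
  { case 1 show ?case
      using qvalid_mkP_rho_chain[OF rho_chain_cyc_pow_arrow set_cyc_pow_arrow_subset] overlong by simp }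
qed (use qvalid_mkP_pair[OF arrows'_subset_H] in simp_all)

lemma reduction_system_R_Gamma:
  "reduction_system (qvalid arrows') tgtQ (RG :: (_ \<times> (_ \<Rightarrow> 'k::field)) set)"
proof -
  have "qvalid arrows' t \<and> length (snd t) \<ge> 2 \<and> \<phi> \<in> path_alg (qvalid arrows') \<and>
      (\<forall>u. \<phi> u \<noteq> 0 \<longrightarrow> fst u = fst t \<and> ptgt tgtQ u = ptgt tgtQ t \<and> irreducible_path RG u)"
    if rule: "(t, \<phi>) \<in> (RG :: (_ \<times> (_ \<Rightarrow> 'k)) set)" for t \<phi>
    using R_Gamma_ruleD[OF rule] R_Gamma_redex[OF rule] redex_length
    by (auto simp: irreducible_path_R_Gamma_iff intro: irreducible_if_short_chain)
  moreover have "\<not> subpath t t'"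
    if "(t, \<phi>) \<in> (RG :: (_ \<times> (_ \<Rightarrow> 'k)) set)" "(t', \<phi>') \<in> (RG :: (_ \<times> (_ \<Rightarrow> 'k)) set)" "t \<noteq> t'"
    for t \<phi> t' \<phi>'
    using R_Gamma_redex[OF that(1)] R_Gamma_redex[OF that(2)] redex_infix that(3)
    unfolding subpath_def by (metis append.left_neutral append_Nil2)
  ultimately show ?thesis
    unfolding reduction_system_def by blast
qed

section \<open>Normal forms of paths\<close>

definition nf_list :: "'h list \<Rightarrow> ('h set, 'h) path \<Rightarrow> 'k::field" where
  "nf_list xs =
     (if short_chain xs then pvec (mkP \<iota> xs)
      else if rho_chain xs \<and> s (last xs) \<in> V1 \<and> length xs = cycle_length (s (last xs))
      then pvec (mkP \<iota> (cyc_pow (\<iota> (last xs))))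
      else (\<lambda>_. 0))"

definition nf_path :: "('h set, 'h) path \<Rightarrow> ('h set, 'h) path \<Rightarrow> 'k::field" where
  "nf_path p = (if snd p = [] then pvec p else nf_list (snd p))"

definition nf :: "(('h set, 'h) path \<Rightarrow> 'k::field) \<Rightarrow> ('h set, 'h) path \<Rightarrow> 'k" where
  "nf f = (\<lambda>u. lin_ext (\<lambda>p. nf_path p u) f)"

lemma nf_list_long:
  assumes "h \<in> H" "ys \<noteq> []" "last ys = h" "length (ql @ ys @ rl) > cycle_length (s h)"
  shows "nf_list (ql @ ys @ rl) = (\<lambda>_. 0)"
proof -
  have "s (last (ql @ ys @ rl)) = s h" if "rho_chain (ql @ ys @ rl)"
    using s_rho_chain[OF that, of "last ys"] assms(2,3) last_in_set[OF assms(2)] by auto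
  then show ?thesis
    using assms(4) s_in_V1_or_V2[OF assms(1)] by (auto simp: nf_list_def short_chain_def)
qed

lemma nf_list_non_rho_chain: "a \<noteq> \<rho> b \<Longrightarrow> nf_list (ql @ [a, b] @ rl) = (\<lambda>_. 0)"
  using rho_chain_pair by (auto simp: nf_list_def short_chain_def)

lemma nf_list_cyc_pow_arrow:
  "h \<in> H \<Longrightarrow> nf_list (ql @ cyc_pow_arrow h @ rl) = (\<lambda>_. 0)"
  using length_cyc_pow_arrow last_cyc_pow_arrow
  by (intro nf_list_long) (auto simp: cyc_pow_arrow_def)

lemma nf_list_cyc_pow_V1:
  assumes h: "h \<in> H" "s h \<in> V1"
  shows "nf_list (ql @ cyc_pow h @ rl) = (nf_list (ql @ cyc_pow (\<iota> h) @ rl) :: _ \<Rightarrow> 'k::field)"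
proof -
  have ih: "\<iota> h \<in> H" "s (\<iota> h) \<in> V2" using h iota_in_H s_iota_in_V2 by auto
  show ?thesis
  proof (cases "ql = [] \<and> rl = []")
    case True
    have "\<not> short_chain (cyc_pow h)"
      using h last_cyc_pow length_cyc_pow by (simp add: short_chain_def)
    then show ?thesis
      using True h short_chain_cyc_pow[OF ih] rho_chain_cyc_pow last_cyc_pow length_cyc_pow
      by (simp add: nf_list_def)
  next
    case False
    then show ?thesis
      using h ih cyc_pow_nonempty last_cyc_pow length_cyc_pow
      by (subst (1 2) nf_list_long) auto
  qed
qed

lemma nf_list_cyc_pow:
  assumes "h \<in> H"
  shows "nf_list (ql @ cyc_pow h @ rl) = (nf_list (ql @ cyc_pow (\<iota> h) @ rl) :: _ \<Rightarrow> 'k::field)"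
proof (cases "s h \<in> V1")
  case False
  then have "s (\<iota> h) \<in> V1" using s_in_V1_or_V2 s_iota_in_V1 assms by blast
  then have "nf_list (ql @ cyc_pow (\<iota> h) @ rl) = (nf_list (ql @ cyc_pow h @ rl) :: _ \<Rightarrow> 'k)"
    using nf_list_cyc_pow_V1[OF iota_in_H[OF assms]] assms by simp
  then show ?thesis by (rule sym)
qed (use nf_list_cyc_pow_V1 assms in blast)

lemma nf_list_nonzeroD:
  assumes "nf_list xs v \<noteq> 0"
  shows "short_chain xs \<and> v = mkP \<iota> xs \<or>
    rho_chain xs \<and> s (last xs) \<in> V1 \<and> v = mkP \<iota> (cyc_pow (\<iota> (last xs)))"
  using assms unfolding nf_list_def
  by (cases "short_chain xs"; cases "rho_chain xs \<and> s (last xs) \<in> V1 \<and> length xs = cycle_length (s (last xs))")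
    (simp_all add: pvec_nonzeroD)

lemma nf_path_nonzeroD:
  assumes "qvalid H p" "(nf_path p :: _ \<Rightarrow> 'k::field) v \<noteq> 0"
  shows "qvalid arrows' v \<and> irreducible (snd v)"
proof (cases "snd p = []")
  case True
  then have "v = p" using assms(2) by (simp add: nf_path_def pvec_nonzeroD)
  with True assms(1) show ?thesis
    by (cases p) (simp add: valid_path_def)
next
  case False
  then have "(nf_list (snd p) :: _ \<Rightarrow> 'k) v \<noteq> 0" using assms(2) by (simp add: nf_path_def)
  from nf_list_nonzeroD[OF this] show ?thesis
  proof (elim disjE conjE)
    assume "rho_chain (snd p)" "s (last (snd p)) \<in> V1" "v = mkP \<iota> (cyc_pow (\<iota> (last (snd p))))"
    moreover have "short_chain (cyc_pow (\<iota> (last (snd p))))"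
      using calculation rho_chain_last_in_H iota_in_H s_iota_in_V2 by (intro short_chain_cyc_pow) auto
    ultimately show ?thesis using qvalid_short_chain irreducible_if_short_chain by simp
  qed (simp add: qvalid_short_chain irreducible_if_short_chain)
qed

lemma nf_path_irreducible:
  assumes "qvalid arrows' p" "irreducible (snd p)"
  shows "(nf_path p :: _ \<Rightarrow> 'k::field) = pvec p"
proof (cases "snd p = []")
  case False
  then have "short_chain (snd p)"
    using short_chain_if_irreducible assms by (metis prod.collapse)
  then show ?thesis
    using False qvalid_eq_mkP[OF assms(1)] by (simp add: nf_path_def nf_list_def)
qed (simp add: nf_path_def)

lemma nf_path_single: "\<exists>w. \<forall>v. (nf_path p :: _ \<Rightarrow> 'k::field) v \<noteq> 0 \<longrightarrow> v = w"
proof -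
  have "\<forall>v. (nf_path p :: _ \<Rightarrow> 'k) v \<noteq> 0 \<longrightarrow>
      v = (if snd p = [] then p else if short_chain (snd p) then mkP \<iota> (snd p)
           else mkP \<iota> (cyc_pow (\<iota> (last (snd p)))))"
    unfolding nf_path_def nf_list_def by (auto dest!: pvec_nonzeroD split: if_splits)
  then show ?thesis by blast
qed

lemma nf_in_path_alg:
  fixes f :: "('h set, 'h) path \<Rightarrow> 'k::field"
  assumes f: "f \<in> path_alg (qvalid H)"
  shows "nf f \<in> path_alg (qvalid arrows')" "nf f u \<noteq> 0 \<Longrightarrow> irreducible (snd u)"
proof -
  let ?S = "{p. f p \<noteq> 0}"
  have fin: "finite ?S" and valid: "\<And>p. p \<in> ?S \<Longrightarrow> qvalid H p"
    using f by (auto simp: path_alg_def)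
  have ex: "\<exists>p\<in>?S. (nf_path p :: _ \<Rightarrow> 'k) u \<noteq> 0" if "nf f u \<noteq> 0" for u
    using that sum.neutral[of ?S "\<lambda>p. f p * nf_path p u"] by (auto simp: nf_def lin_ext_def)
  obtain w where w: "\<And>p v. (nf_path p :: _ \<Rightarrow> 'k) v \<noteq> 0 \<Longrightarrow> v = w p"
    using nf_path_single[where 'k='k] by metis
  have "{u. nf f u \<noteq> 0} \<subseteq> w ` ?S" using ex w by blast
  then have "finite {u. nf f u \<noteq> 0}" using fin finite_subset by blast
  moreover have out: "qvalid arrows' u \<and> irreducible (snd u)" if "nf f u \<noteq> 0" for u
    using ex[OF that] valid nf_path_nonzeroD by blast
  ultimately show "nf f \<in> path_alg (qvalid arrows')" by (simp add: path_alg_def)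
  show "nf f u \<noteq> 0 \<Longrightarrow> irreducible (snd u)" using out by blast
qed

lemma nf_irreducible:
  fixes f :: "('h set, 'h) path \<Rightarrow> 'k::field"
  assumes f: "f \<in> path_alg (qvalid arrows')" and irr: "\<forall>u. f u \<noteq> 0 \<longrightarrow> irreducible (snd u)"
  shows "nf f = f"
proof
  fix u
  have "nf f u = lin_ext (\<lambda>p. pvec p u) f"
    unfolding nf_def
  proof (rule lin_ext_cong)
    fix p assume "f p \<noteq> 0"
    then have "qvalid arrows' p" "irreducible (snd p)" using f irr unfolding path_alg_def by blast+
    then show "nf_path p u = pvec p u" by (simp add: nf_path_irreducible)
  qed
  also have "\<dots> = f u"
    using f by (simp add: path_alg_def lin_ext_pvec_eval)
  finally show "nf f u = f u" .
qed

lemma nf_diff: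
  "finite {p. x p \<noteq> 0} \<Longrightarrow> finite {p. y p \<noteq> 0} \<Longrightarrow>
    nf (\<lambda>p. x p - y p) = (\<lambda>u. nf x u - nf (y :: _ \<Rightarrow> 'k::field) u)"
  unfolding nf_def by (rule ext) (rule lin_ext_diff)

section \<open>Paths are congruent to their normal forms\<close>

lemma pvec_infix_in_ideal:
  assumes A: "A \<subseteq> H" and valid: "qvalid A (x, ql @ sl @ rl)" and "sl \<noteq> []"
    and sl: "(pvec (mkP \<iota> sl) :: _ \<Rightarrow> 'k::field) \<in> ideal_gen (qvalid A) tgtQ G"
  shows "(pvec (x, ql @ sl @ rl) :: _ \<Rightarrow> 'k) \<in> ideal_gen (qvalid A) tgtQ G"
proof -
  define r where "r = (x, rl)"
  define t where "t = (ptgt tgtQ r, sl)"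
  define q where "q = (ptgt tgtQ (x, sl @ rl), ql)"
  have valid_q: "qvalid A q" and "qvalid A (x, sl @ rl)"
    using valid_path_appendD[OF valid ball_btgt_in_edges[OF A]] by (auto simp: q_def)
  then have valid_r: "qvalid A r" and "qvalid A t"
    using valid_path_appendD[of _ A _ _ x sl rl, OF _ ball_btgt_in_edges[OF A]] by (auto simp: r_def t_def)
  then have "t = mkP \<iota> sl" using qvalid_eq_mkP[of A t] \<open>sl \<noteq> []\<close> by (simp add: t_def)
  have "amult tgtQ (amult tgtQ (pvec q) (pvec t)) (pvec r) \<in> ideal_gen (qvalid A) tgtQ G"
    using sl \<open>t = mkP \<iota> sl\<close> valid_q valid_r by (auto intro: ideal_gen.lmult ideal_gen.rmult)
  also have "amult tgtQ (amult tgtQ (pvec q) (pvec t)) (pvec r) = (pvec (x, ql @ sl @ rl) :: _ \<Rightarrow> 'k)"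
    using \<open>sl \<noteq> []\<close>
    by (simp add: amult_pvec_pvec_left amult_pvec_pvec_right q_def t_def r_def ptgt_def pcomp_def)
  finally show ?thesis .
qed

lemma pvec_non_rho_chain_in_ideal:
  assumes A: "A \<subseteq> H"
    and pair: "\<And>a b. a \<in> A \<Longrightarrow> b \<in> A \<Longrightarrow> tgtQ b = srcQ a \<Longrightarrow> a \<noteq> \<rho> b \<Longrightarrow>
        (pvec (mkP \<iota> [a, b]) :: _ \<Rightarrow> 'k::field) \<in> ideal_gen (qvalid A) tgtQ G"
    and valid: "qvalid A (x, xs)" and "xs \<noteq> []" and "\<not> rho_chain xs"
  shows "(pvec (x, xs) :: _ \<Rightarrow> 'k) \<in> ideal_gen (qvalid A) tgtQ G"
proof -
  have "set xs \<subseteq> A" using valid by (simp add: valid_path_def)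
  then obtain ql a b rl where split: "xs = ql @ [a, b] @ rl" "a \<noteq> \<rho> b"
    using not_rho_chainE[OF \<open>xs \<noteq> []\<close> _ \<open>\<not> rho_chain xs\<close>] A by blast
  moreover have "a \<in> A" "b \<in> A" using \<open>set xs \<subseteq> A\<close> split by auto
  moreover have "tgtQ b = srcQ a" using qvalid_adjacent valid split by blast
  ultimately have "(pvec (mkP \<iota> [a, b]) :: _ \<Rightarrow> 'k) \<in> ideal_gen (qvalid A) tgtQ G"
    using pair by blast
  from pvec_infix_in_ideal[OF A valid[unfolded split(1)] _ this] show ?thesis
    using split by simp
qed

text \<open>Both \<open>I\<^sub>\<Gamma>\<close> (with all arrows) and the ideal generated by \<open>R\<^sub>\<Gamma>\<close> (with the arrows of
  \<open>Q'\<^sub>\<Gamma>\<close>) satisfy the following assumptions.\<close>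

context
  fixes A :: "'h set" and G :: "(('h set, 'h) path \<Rightarrow> 'k::field) set"
  assumes A_subset: "A \<subseteq> H"
    and V2_arrows_in_A: "\<And>h. h \<in> H \<Longrightarrow> s h \<in> V2 \<Longrightarrow> h \<in> A"
    and pair_in_ideal: "\<And>a b. a \<in> A \<Longrightarrow> b \<in> A \<Longrightarrow> tgtQ b = srcQ a \<Longrightarrow> a \<noteq> \<rho> b \<Longrightarrow>
        pvec (mkP \<iota> [a, b]) \<in> ideal_gen (qvalid A) tgtQ G"
    and overlong_in_ideal: "\<And>h. h \<in> H \<Longrightarrow> s h \<in> V2 \<Longrightarrow>
        pvec (mkP \<iota> (cyc_pow_arrow h)) \<in> ideal_gen (qvalid A) tgtQ G"
    and cycle_in_ideal: "\<And>h. h \<in> A \<Longrightarrow> s h \<in> V1 \<Longrightarrow>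
        (\<lambda>x. pvec (mkP \<iota> (cyc_pow h)) x - pvec (mkP \<iota> (cyc_pow (\<iota> h))) x) \<in> ideal_gen (qvalid A) tgtQ G"
begin

text \<open>A rho-chain \<open>P C\<^sup>m\<close> at a vertex of \<open>V\<^sub>1\<close> is congruent to \<open>P C\<^sup>m\<close> taken at the other end
  of the edge, which is not a rho-chain since \<open>P\<close> stays at the first vertex.\<close>

lemma pvec_prefix_cyc_pow_in_ideal:
  assumes valid: "qvalid A (x, pre @ cyc_pow h)" and "pre \<noteq> []"
    and h: "h \<in> A" "s h \<in> V1" and chain: "rho_chain (pre @ cyc_pow h)"
  shows "pvec (x, pre @ cyc_pow h) \<in> ideal_gen (qvalid A) tgtQ G"
proof -
  let ?J = "ideal_gen (qvalid A) tgtQ G"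
  have "h \<in> H" "\<iota> h \<in> H" "s (\<iota> h) \<in> V2" using h A_subset iota_in_H s_iota_in_V2 by auto
  define q where "q = (ptgt tgtQ (x, cyc_pow h), pre)"
  define S where "S = mkP \<iota> (cyc_pow h)"
  define T where "T = mkP \<iota> (cyc_pow (\<iota> h))"
  have valid_q: "qvalid A q" and "qvalid A (x, cyc_pow h)"
    using valid_path_appendD[OF valid ball_btgt_in_edges[OF A_subset]] by (auto simp: q_def)
  then have S: "S = (x, cyc_pow h)"
    using qvalid_eq_mkP[of A "(x, cyc_pow h)"] cyc_pow_nonempty[OF \<open>h \<in> H\<close>] by (simp add: S_def)
  have tgt_S: "ptgt tgtQ S = fst q"
    using S by (simp add: q_def)
  also have "ptgt tgtQ S = srcQ h"
    using ptgt_mkP_cyc_pow \<open>h \<in> H\<close> by (simp add: S_def)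
  finally have tgt_T: "ptgt tgtQ T = fst q"
    using ptgt_mkP_cyc_pow \<open>\<iota> h \<in> H\<close> bsrc_iota \<open>h \<in> H\<close> by (simp add: T_def)
  have "amult tgtQ (pvec q) (\<lambda>x. pvec S x - pvec T x) \<in> ?J"
    using cycle_in_ideal[OF h] valid_q by (simp add: S_def T_def ideal_gen.lmult)
  then have diff: "(\<lambda>u. pvec (pcomp q S) u - pvec (pcomp q T) u) \<in> ?J"
    by (simp add: amult_pvec_left_diff amult_pvec_pvec_left[OF tgt_S] amult_pvec_pvec_left[OF tgt_T])
  have "set (cyc_pow (\<iota> h)) \<subseteq> A"
    using V2_arrows_in_A rho_chain_in_H[OF rho_chain_cyc_pow] s_cyc_pow \<open>\<iota> h \<in> H\<close> \<open>s (\<iota> h) \<in> V2\<close>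
    by auto
  then have "qvalid A T"
    using qvalid_mkP_rho_chain rho_chain_cyc_pow \<open>\<iota> h \<in> H\<close> by (simp add: T_def)
  then have valid_qT: "qvalid A (pcomp q T)" using valid_path_pcomp valid_q tgt_T by blast
  have "\<not> rho_chain (pre @ cyc_pow (\<iota> h))"
  proof
    assume "rho_chain (pre @ cyc_pow (\<iota> h))"
    then have "s (last pre) = s (\<iota> h)"
      using s_rho_chain[of _ "last pre"] \<open>pre \<noteq> []\<close> last_cyc_pow cyc_pow_nonempty \<open>\<iota> h \<in> H\<close> by simp
    moreover have "s (last pre) = s h"
      using s_rho_chain[OF chain, of "last pre"] \<open>pre \<noteq> []\<close> last_cyc_pow cyc_pow_nonempty \<open>h \<in> H\<close>
      by simp
    ultimately show False using h(2) \<open>s (\<iota> h) \<in> V2\<close> V1_V2_disjoint by simp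
  qed
  moreover have qT: "pcomp q T = (fst T, pre @ cyc_pow (\<iota> h))"
    by (simp add: pcomp_def T_def q_def)
  ultimately have "pvec (pcomp q T) \<in> ?J"
    using pvec_non_rho_chain_in_ideal[OF A_subset pair_in_ideal] valid_qT \<open>pre \<noteq> []\<close>
    by (simp only: qT) simp
  with diff have "(\<lambda>u. (pvec (pcomp q S) u - pvec (pcomp q T) u) + pvec (pcomp q T) u) \<in> ?J"
    by (rule ideal_gen.add)
  then show ?thesis by (simp add: S q_def pcomp_def)
qed

lemma pvec_long_V1_chain_in_ideal:
  assumes valid: "qvalid A (x, xs)" and chain: "rho_chain xs"
    and V1: "s (last xs) \<in> V1" and long: "length xs > cycle_length (s (last xs))"
  shows "pvec (x, xs) \<in> ideal_gen (qvalid A) tgtQ G"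
proof -
  let ?h = "last xs"
  have "?h \<in> H" "?h \<in> A"
    using rho_chain_last_in_H[OF chain] valid chain by (auto simp: valid_path_def rho_chain_def)
  define pre where "pre = take (length xs - cycle_length (s ?h)) xs"
  have xs: "xs = pre @ cyc_pow ?h"
    unfolding pre_def using rho_chain_drop_suffix[OF chain _ _ rho_chain_cyc_pow last_cyc_pow]
      long length_cyc_pow cycle_length_pos \<open>?h \<in> H\<close> by simp
  have "length xs = length pre + cycle_length (s ?h)"
    using arg_cong[OF xs, of length] length_cyc_pow[OF \<open>?h \<in> H\<close>] by simp
  then have "pre \<noteq> []" using long by auto
  then have "pvec (x, pre @ cyc_pow ?h) \<in> ideal_gen (qvalid A) tgtQ G"
    using pvec_prefix_cyc_pow_in_ideal valid chain V1 xs \<open>?h \<in> A\<close> by metis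
  then show ?thesis using xs by simp
qed

lemma pvec_long_V2_chain_in_ideal:
  assumes valid: "qvalid A (x, xs)" and chain: "rho_chain xs"
    and V2: "s (last xs) \<in> V2" and long: "length xs > cycle_length (s (last xs))"
  shows "pvec (x, xs) \<in> ideal_gen (qvalid A) tgtQ G"
proof -
  let ?h = "last xs"
  have "?h \<in> H" using rho_chain_last_in_H[OF chain] .
  define pre where "pre = take (length xs - Suc (cycle_length (s ?h))) xs"
  have xs: "xs = pre @ cyc_pow_arrow ?h @ []"
    using long rho_chain_drop_suffix[OF chain _ _ rho_chain_cyc_pow_arrow last_cyc_pow_arrow]
      length_cyc_pow_arrow \<open>?h \<in> H\<close> by (simp add: pre_def)
  have "qvalid A (x, pre @ cyc_pow_arrow ?h @ [])"
    using valid xs by (simp only:)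
  then have "pvec (x, pre @ cyc_pow_arrow ?h @ []) \<in> ideal_gen (qvalid A) tgtQ G"
    by (rule pvec_infix_in_ideal[OF A_subset _ _ overlong_in_ideal[OF \<open>?h \<in> H\<close> V2]])
      (simp add: cyc_pow_arrow_def)
  then show ?thesis using xs by (simp only:)
qed

lemma pvec_minus_nf_path_in_ideal:
  assumes valid: "qvalid A p"
  shows "(\<lambda>u. pvec p u - nf_path p u) \<in> ideal_gen (qvalid A) tgtQ G"
proof -
  let ?J = "ideal_gen (qvalid A) tgtQ G"
  obtain x xs where p: "p = (x, xs)" by (cases p)
  let ?h = "last xs"
  consider "xs = [] \<or> short_chain xs" | "xs \<noteq> []" "\<not> rho_chain xs"
    | "rho_chain xs" "s ?h \<in> V2" "length xs > cycle_length (s ?h)"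
    | "rho_chain xs" "s ?h \<in> V1" "length xs = cycle_length (s ?h)"
    | "rho_chain xs" "s ?h \<in> V1" "length xs > cycle_length (s ?h)"
    using s_in_V1_or_V2 rho_chain_last_in_H
    by (cases "xs = []", cases "rho_chain xs"; fastforce simp: short_chain_def)
  then show ?thesis
  proof cases
    case 1
    moreover have "xs \<noteq> [] \<Longrightarrow> p = mkP \<iota> xs"
      using qvalid_eq_mkP[OF valid] p by simp
    ultimately have "(nf_path p :: _ \<Rightarrow> 'k) = pvec p"
      using p by (auto simp: nf_path_def nf_list_def)
    then show ?thesis by (simp add: ideal_gen.zero)
  next
    case 2
    then have "pvec p \<in> ?J"
      using pvec_non_rho_chain_in_ideal[OF A_subset pair_in_ideal] valid p by blast
    moreover have "(nf_path p :: _ \<Rightarrow> 'k) = (\<lambda>_. 0)"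
      using 2 p by (simp add: nf_path_def nf_list_def short_chain_def)
    ultimately show ?thesis by simp
  next
    case 3
    then show ?thesis
      using pvec_long_V2_chain_in_ideal[OF valid[unfolded p]] V1_V2_disjoint
      by (auto simp: p nf_path_def nf_list_def short_chain_def)
  next
    case 4
    then have "?h \<in> H" "?h \<in> A" "xs \<noteq> []"
      using rho_chain_last_in_H valid p by (auto simp: valid_path_def rho_chain_def)
    then have "xs = cyc_pow ?h"
      using 4 rho_chain_eqI[OF _ rho_chain_cyc_pow] length_cyc_pow last_cyc_pow by simp
    moreover have "p = mkP \<iota> xs"
      using qvalid_eq_mkP[OF valid] p \<open>xs \<noteq> []\<close> by simp
    ultimately show ?thesis
      using 4 cycle_in_ideal[OF \<open>?h \<in> A\<close>] \<open>xs \<noteq> []\<close>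
      by (simp add: nf_path_def nf_list_def short_chain_def)
  next
    case 5
    then show ?thesis
      using pvec_long_V1_chain_in_ideal[OF valid[unfolded p]]
      by (simp add: p nf_path_def nf_list_def short_chain_def ideal_gen.zero)
  qed
qed

end

lemma pair_in_I_Gamma:
  assumes "a \<in> H" "b \<in> H" "tgtQ b = srcQ a" "a \<noteq> \<rho> b"
  shows "(pvec (mkP \<iota> [a, b]) :: _ \<Rightarrow> 'k::field) \<in> I_Gamma H s \<iota> \<rho> m"
proof -
  have "b \<noteq> \<sigma> a" using assms by auto
  with assms show ?thesis
    unfolding I_Gamma_def by (intro ideal_gen.gen UnI1) blast
qed

lemma cycle_in_I_Gamma:
  "h \<in> H \<Longrightarrow> (\<lambda>x. (pvec (mkP \<iota> (cyc_pow h)) :: _ \<Rightarrow> 'k::field) x - pvec (mkP \<iota> (cyc_pow (\<iota> h))) x)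
    \<in> I_Gamma H s \<iota> \<rho> m"
  unfolding I_Gamma_def cyc_pow_def by (rule ideal_gen.gen) blast

text \<open>By (II), the cycle power in \<open>C\<^sup>m \<alpha>\<close> may be replaced by the one at the other end of its
  edge, whose first arrow does not follow \<open>\<alpha>\<close> around a vertex; then (I) applies.\<close>

lemma cyc_pow_arrow_in_I_Gamma:
  assumes h: "h \<in> H"
  shows "(pvec (mkP \<iota> (cyc_pow_arrow h)) :: _ \<Rightarrow> 'k::field) \<in> I_Gamma H s \<iota> \<rho> m"
proof -
  let ?I = "I_Gamma H s \<iota> \<rho> m :: (_ \<Rightarrow> 'k) set"
  define g where "g = \<rho> h"
  have "g \<in> H" "\<iota> g \<in> H" using h rho_in_H iota_in_H by (auto simp: g_def)
  define S where "S = mkP \<iota> (cyc_pow g)"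
  define T where "T = mkP \<iota> (cyc_pow (\<iota> g))"
  define r where "r = mkP \<iota> [h]"
  have valid_r: "qvalid H r"
    using qvalid_mkP_rho_chain[OF rho_chain_single[OF h]] h by (simp add: r_def)
  have "ptgt tgtQ r = srcQ g" by (simp add: r_def g_def ptgt_def mkP_def btgt_eq_bsrc_rho)
  then have fst_S: "fst S = ptgt tgtQ r" and fst_T: "fst T = ptgt tgtQ r"
    using fst_mkP_cyc_pow \<open>g \<in> H\<close> \<open>\<iota> g \<in> H\<close> bsrc_iota by (simp_all add: S_def T_def)
  have "amult tgtQ (\<lambda>x. pvec S x - pvec T x) (pvec r) \<in> ?I"
    using cycle_in_I_Gamma[OF \<open>g \<in> H\<close>] valid_r
    unfolding S_def T_def I_Gamma_def validQ_eq by (rule ideal_gen.rmult)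
  then have diff: "(\<lambda>u. pvec (pcomp S r) u - pvec (pcomp T r) u) \<in> ?I"
    by (simp add: amult_pvec_right_diff amult_pvec_pvec_right[OF fst_S] amult_pvec_pvec_right[OF fst_T])
  obtain T0 where T0: "cyc_pow (\<iota> g) = T0 @ [\<iota> g]"
    using last_cyc_pow[OF \<open>\<iota> g \<in> H\<close>] cyc_pow_nonempty[OF \<open>\<iota> g \<in> H\<close>]
    by (metis append_butlast_last_id)
  have "set (cyc_pow (\<iota> g)) \<subseteq> H"
    using rho_chain_in_H[OF rho_chain_cyc_pow[OF \<open>\<iota> g \<in> H\<close>]] by blast
  then have "qvalid H T"
    using qvalid_mkP_rho_chain[OF rho_chain_cyc_pow[OF \<open>\<iota> g \<in> H\<close>]] by (simp add: T_def)
  then have "qvalid H (fst r, T0 @ [\<iota> g, h] @ [])"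
    using valid_path_pcomp[OF _ valid_r fst_T[symmetric]] by (simp add: pcomp_def T_def T0 r_def)
  moreover have "tgtQ h = srcQ (\<iota> g)" "\<iota> g \<noteq> \<rho> h"
    using iota_neq \<open>g \<in> H\<close> bsrc_iota by (simp_all add: g_def btgt_eq_bsrc_rho)
  ultimately have "pvec (pcomp T r) \<in> ?I"
    using pvec_infix_in_ideal[OF order_refl, of "fst r" T0 "[\<iota> g, h]" "[]"]
      pair_in_I_Gamma[OF \<open>\<iota> g \<in> H\<close> h] unfolding I_Gamma_def validQ_eq
    by (simp add: pcomp_def T_def T0 r_def)
  with diff have "(\<lambda>u. (pvec (pcomp S r) u - pvec (pcomp T r) u) + pvec (pcomp T r) u) \<in> ?I"
    unfolding I_Gamma_def by (rule ideal_gen.add)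
  moreover have "pcomp S r = mkP \<iota> (cyc_pow_arrow h)"
    using h by (simp add: S_def r_def g_def cyc_pow_arrow_eq pcomp_def mkP_def)
  ultimately show ?thesis by simp
qed

lemma pvec_minus_nf_path_in_I_Gamma:
  "qvalid H p \<Longrightarrow> (\<lambda>u. pvec p u - (nf_path p :: _ \<Rightarrow> 'k::field) u) \<in> I_Gamma H s \<iota> \<rho> m"
  using pvec_minus_nf_path_in_ideal[OF order_refl _ pair_in_I_Gamma[unfolded I_Gamma_def validQ_eq]
      cyc_pow_arrow_in_I_Gamma[unfolded I_Gamma_def validQ_eq]
      cycle_in_I_Gamma[unfolded I_Gamma_def validQ_eq]]
  unfolding I_Gamma_def validQ_eq by blast

abbreviation R_generators :: "(('h set, 'h) path \<Rightarrow> 'k::field) set" where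
  "R_generators \<equiv> {(\<lambda>x. pvec t x - \<phi> x) | t \<phi>. (t, \<phi>) \<in> RG}"

lemma pvec_in_R_generators:
  "(t, \<lambda>_. 0 :: 'k::field) \<in> RG \<Longrightarrow> (pvec t :: _ \<Rightarrow> 'k) \<in> R_generators"
  by (intro CollectI exI[of _ t] exI[of _ "\<lambda>_. 0 :: 'k"]) simp

lemma pvec_minus_nf_path_in_R_ideal:
  assumes "qvalid arrows' p"
  shows "(\<lambda>u. pvec p u - (nf_path p :: _ \<Rightarrow> 'k::field) u) \<in> ideal_gen (qvalid arrows') tgtQ R_generators"
proof (rule pvec_minus_nf_path_in_ideal[OF arrows'_subset_H _ _ _ _ assms])
  show "h \<in> arrows'" if "h \<in> H" "s h \<in> V2" for h
    using that V1_V2_disjoint by (auto intro: in_arrows'I)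
  show "pvec (mkP \<iota> [a, b]) \<in> ideal_gen (qvalid arrows') tgtQ R_generators"
    if "a \<in> arrows'" "b \<in> arrows'" "tgtQ b = srcQ a" "a \<noteq> \<rho> b" for a b
    using R_Gamma_pairI[OF that] by (intro ideal_gen.gen pvec_in_R_generators)
  show "pvec (mkP \<iota> (cyc_pow_arrow h)) \<in> ideal_gen (qvalid arrows') tgtQ R_generators"
    if "h \<in> H" "s h \<in> V2" for h
    using R_Gamma_overlongI[OF that] by (intro ideal_gen.gen pvec_in_R_generators)
  show "(\<lambda>x. pvec (mkP \<iota> (cyc_pow h)) x - pvec (mkP \<iota> (cyc_pow (\<iota> h))) x)
      \<in> ideal_gen (qvalid arrows') tgtQ R_generators"
    if "h \<in> arrows'" "s h \<in> V1" for h
    using R_Gamma_cycleI[OF _ that(2) not_truncated_if_in_arrows'[OF that]] that(1) arrows'_subset_H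
    by (intro ideal_gen.gen) blast
qed

lemma R_generators_in_I_Gamma:
  assumes "g \<in> (R_generators :: (_ \<Rightarrow> 'k::field) set)"
  shows "g \<in> I_Gamma H s \<iota> \<rho> m"
proof -
  obtain t \<phi> where g: "g = (\<lambda>x. pvec t x - \<phi> x)" and rule: "(t, \<phi>) \<in> RG" using assms by blast
  from rule show ?thesis
  proof (cases rule: R_GammaE)
    case (pair a b)
    then show ?thesis
      using g pair_in_I_Gamma arrows'_subset_H by auto
  qed (use g cycle_in_I_Gamma cyc_pow_arrow_in_I_Gamma in auto)
qed

lemma R_generators_in_path_alg:
  assumes "g \<in> (R_generators :: (_ \<Rightarrow> 'k::field) set)"
  shows "g \<in> path_alg (qvalid arrows')"
proof -
  obtain t \<phi> where g: "g = (\<lambda>x. pvec t x - \<phi> x)" and rule: "(t, \<phi>) \<in> RG" using assms by blast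
  have "(pvec t :: _ \<Rightarrow> 'k) \<in> path_alg (qvalid arrows')"
    using pvec_in_path_alg R_Gamma_ruleD(1)[OF rule] by blast
  from path_alg_diff[OF this R_Gamma_ruleD(2)[OF rule]] show ?thesis
    unfolding g .
qed

lemma R_ideal_subset_I'_Gamma:
  assumes "x \<in> ideal_gen (qvalid arrows') tgtQ (R_generators :: (_ \<Rightarrow> 'k::field) set)"
  shows "x \<in> I'_Gamma H s \<iota> \<rho> m V1"
proof -
  have "x \<in> I_Gamma H s \<iota> \<rho> m"
    using ideal_gen_mono[OF assms qvalid_mono[OF arrows'_subset_H]
        R_generators_in_I_Gamma[unfolded I_Gamma_def validQ_eq]]
    unfolding I_Gamma_def validQ_eq .
  moreover have "x \<in> path_alg (qvalid arrows')"
    using ideal_gen_subset_path_alg[OF assms _ valid_path_pcomp] R_generators_in_path_alg by blast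
  ultimately show ?thesis
    by (simp add: I'_Gamma_def validQ'_eq)
qed

section \<open>The normal form vanishes on \<open>I\<^sub>\<Gamma>\<close>\<close>

text \<open>\<open>nf_ctx e\<^sub>1 e\<^sub>2 ql rl u p\<close> is the coefficient of \<open>u\<close> in the normal form of the path
  \<open>ql p rl\<close>. The optional endpoint constraints \<open>e\<^sub>1, e\<^sub>2\<close> remember where the removed context
  paths were attached, so that vanishing of all these functionals is stable under
  multiplication by paths.\<close>

definition fits :: "'h set option \<Rightarrow> 'h set option \<Rightarrow> ('h set, 'h) path \<Rightarrow> bool" where
  "fits e1 e2 p \<longleftrightarrow> (case e1 of None \<Rightarrow> True | Some e \<Rightarrow> ptgt tgtQ p = e) \<and>
     (case e2 of None \<Rightarrow> True | Some e \<Rightarrow> fst p = e)"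

definition nf_ctx :: "'h set option \<Rightarrow> 'h set option \<Rightarrow> 'h list \<Rightarrow> 'h list
    \<Rightarrow> ('h set, 'h) path \<Rightarrow> ('h set, 'h) path \<Rightarrow> 'k::field" where
  "nf_ctx e1 e2 ql rl u p =
     (if fits e1 e2 p then (if ql @ snd p @ rl = [] then pvec p u else nf_list (ql @ snd p @ rl) u)
      else 0)"

definition nf_killed :: "(('h set, 'h) path \<Rightarrow> 'k::field) \<Rightarrow> bool" where
  "nf_killed x \<longleftrightarrow> finite {p. x p \<noteq> 0} \<and> (\<forall>e1 e2 ql rl u. lin_ext (nf_ctx e1 e2 ql rl u) x = 0)"

lemma nf_ctx_pcomp_left:
  assumes "e1 = None \<or> e1 = Some (ptgt tgtQ q)"
  shows "(if ptgt tgtQ p = fst q then nf_ctx e1 e2 ql rl u (pcomp q p) else 0) =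
    (nf_ctx (Some (fst q)) e2 (ql @ snd q) rl u p :: 'k::field)"
proof (cases "ptgt tgtQ p = fst q")
  case True
  then have "fits e1 e2 (pcomp q p) = fits (Some (fst q)) e2 p"
    using assms ptgt_pcomp_left[OF True] by (cases e2) (auto simp: fits_def)
  moreover have "ql @ snd (pcomp q p) @ rl = [] \<Longrightarrow> pcomp q p = p"
    by (cases p) (simp add: pcomp_def)
  ultimately show ?thesis
    using True unfolding nf_ctx_def by auto
qed (simp add: nf_ctx_def fits_def)

lemma nf_ctx_pcomp_left_mismatch:
  "e1 = Some e \<Longrightarrow> e \<noteq> ptgt tgtQ q \<Longrightarrow>
    (if ptgt tgtQ p = fst q then nf_ctx e1 e2 ql rl u (pcomp q p) else 0) = (0::'k::field)"
  using ptgt_pcomp_left[of tgtQ p q] by (simp add: nf_ctx_def fits_def)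

lemma nf_ctx_pcomp_right:
  assumes "e2 = None \<or> e2 = Some (fst r)"
  shows "(if fst p = ptgt tgtQ r then nf_ctx e1 e2 ql rl u (pcomp p r) else 0) =
    (nf_ctx e1 (Some (ptgt tgtQ r)) ql (snd r @ rl) u p :: 'k::field)"
proof (cases "fst p = ptgt tgtQ r")
  case True
  then have "fits e1 e2 (pcomp p r) = fits e1 (Some (ptgt tgtQ r)) p"
    using assms ptgt_pcomp_right[OF True] by (cases e1) (auto simp: fits_def)
  moreover have "ql @ snd (pcomp p r) @ rl = [] \<Longrightarrow> pcomp p r = p"
    using True by (cases p, cases r) (simp add: pcomp_def ptgt_def)
  ultimately show ?thesis
    using True unfolding nf_ctx_def by auto
qed (simp add: nf_ctx_def fits_def)

lemma nf_ctx_pcomp_right_mismatch: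
  "e2 = Some e \<Longrightarrow> e \<noteq> fst r \<Longrightarrow>
    (if fst p = ptgt tgtQ r then nf_ctx e1 e2 ql rl u (pcomp p r) else 0) = (0::'k::field)"
  by (simp add: nf_ctx_def fits_def)

lemma nf_killed_amult_left:
  assumes killed: "nf_killed (x :: _ \<Rightarrow> 'k::field)"
  shows "nf_killed (amult tgtQ (pvec q) x)"
proof -
  let ?y = "amult tgtQ (pvec q) x"
  let ?C = "\<lambda>p. ptgt tgtQ p = fst q"
  have fin: "finite {p. x p \<noteq> 0}" using killed by (simp add: nf_killed_def)
  have supp: "\<And>u. ?y u \<noteq> 0 \<Longrightarrow> \<exists>p. ?C p \<and> u = pcomp q p \<and> x p \<noteq> 0"
    using amult_pvec_left_nonzeroD by blast
  have "inj_on (pcomp q) {p. x p \<noteq> 0 \<and> ?C p}"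
    by (rule inj_onI) (rule pcomp_cancel_left)
  note reindex = lin_ext_reindex[OF fin this supp amult_pvec_left_pcomp]
  have "lin_ext (nf_ctx e1 e2 ql rl u) ?y = 0" for e1 e2 ql rl u
  proof (cases "e1 = None \<or> e1 = Some (ptgt tgtQ q)")
    case True
    then have "lin_ext (nf_ctx e1 e2 ql rl u) ?y = lin_ext (nf_ctx (Some (fst q)) e2 (ql @ snd q) rl u) x"
      by (simp add: reindex nf_ctx_pcomp_left)
    also have "\<dots> = 0" using killed unfolding nf_killed_def by blast
    finally show ?thesis .
  next
    case False
    then obtain e where "e1 = Some e" "e \<noteq> ptgt tgtQ q" by (cases e1) auto
    then show ?thesis
      by (simp add: reindex nf_ctx_pcomp_left_mismatch lin_ext_eq_0)
  qed
  moreover have "finite {u. ?y u \<noteq> 0}"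
    using finite_support_reindex[OF fin] supp by metis
  ultimately show ?thesis by (simp add: nf_killed_def)
qed

lemma nf_killed_amult_right:
  assumes killed: "nf_killed (x :: _ \<Rightarrow> 'k::field)"
  shows "nf_killed (amult tgtQ x (pvec r))"
proof -
  let ?y = "amult tgtQ x (pvec r)"
  let ?C = "\<lambda>p. fst p = ptgt tgtQ r"
  have fin: "finite {p. x p \<noteq> 0}" using killed by (simp add: nf_killed_def)
  have supp: "\<And>u. ?y u \<noteq> 0 \<Longrightarrow> \<exists>p. ?C p \<and> u = pcomp p r \<and> x p \<noteq> 0"
    using amult_pvec_right_nonzeroD by blast
  have "inj_on (\<lambda>p. pcomp p r) {p. x p \<noteq> 0 \<and> ?C p}"
    by (rule inj_onI) (metis (mono_tags, lifting) mem_Collect_eq pcomp_cancel_right)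
  note reindex = lin_ext_reindex[OF fin this supp amult_pvec_right_pcomp]
  have "lin_ext (nf_ctx e1 e2 ql rl u) ?y = 0" for e1 e2 ql rl u
  proof (cases "e2 = None \<or> e2 = Some (fst r)")
    case True
    then have "lin_ext (nf_ctx e1 e2 ql rl u) ?y = lin_ext (nf_ctx e1 (Some (ptgt tgtQ r)) ql (snd r @ rl) u) x"
      by (simp add: reindex nf_ctx_pcomp_right)
    also have "\<dots> = 0" using killed unfolding nf_killed_def by blast
    finally show ?thesis .
  next
    case False
    then obtain e where "e2 = Some e" "e \<noteq> fst r" by (cases e2) auto
    then show ?thesis
      by (simp add: reindex nf_ctx_pcomp_right_mismatch lin_ext_eq_0)
  qed
  moreover have "finite {u. ?y u \<noteq> 0}"
    using finite_support_reindex[OF fin] supp by metis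
  ultimately show ?thesis by (simp add: nf_killed_def)
qed

lemma nf_killed_pair:
  assumes "b \<in> H" "b \<noteq> \<sigma> a"
  shows "nf_killed (pvec (mkP \<iota> [a, b]) :: _ \<Rightarrow> 'k::field)"
proof -
  have "a \<noteq> \<rho> b" using assms by auto
  then show ?thesis
    by (simp add: nf_killed_def finite_support_pvec nf_ctx_def nf_list_non_rho_chain[simplified])
qed

lemma nf_killed_cycle:
  assumes "h \<in> H"
  shows "nf_killed (\<lambda>x. pvec (mkP \<iota> (cyc_pow h)) x - pvec (mkP \<iota> (cyc_pow (\<iota> h))) x :: 'k::field)"
proof -
  have "fits e1 e2 (mkP \<iota> (cyc_pow h)) = fits e1 e2 (mkP \<iota> (cyc_pow (\<iota> h)))" for e1 e2
    using assms iota_in_H[OF assms]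
    by (simp add: fits_def fst_mkP_cyc_pow ptgt_mkP_cyc_pow bsrc_iota split: option.split)
  then have "(nf_ctx e1 e2 ql rl u (mkP \<iota> (cyc_pow h)) :: 'k) = nf_ctx e1 e2 ql rl u (mkP \<iota> (cyc_pow (\<iota> h)))"
    for e1 e2 ql rl u
    using cyc_pow_nonempty assms iota_in_H[OF assms]
    by (simp add: nf_ctx_def nf_list_cyc_pow[OF assms])
  moreover have "finite {p. (pvec (mkP \<iota> (cyc_pow h)) p :: 'k) - pvec (mkP \<iota> (cyc_pow (\<iota> h))) p \<noteq> 0}"
    by (rule finite_support_diff[OF finite_support_pvec finite_support_pvec])
  ultimately show ?thesis
    by (simp add: nf_killed_def lin_ext_diff finite_support_pvec)
qed

lemma nf_killed_I_Gamma:
  assumes "x \<in> I_Gamma H s \<iota> \<rho> m"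
  shows "nf_killed (x :: _ \<Rightarrow> 'k::field)"
  using assms unfolding I_Gamma_def
proof induction
  case (gen g)
  then show ?case
    using nf_killed_pair nf_killed_cycle unfolding cyc_pow_def by blast
next
  case (add x y)
  then show ?case by (simp add: nf_killed_def lin_ext_add finite_support_add)
next
  case (smult x c)
  then show ?case by (simp add: nf_killed_def lin_ext_smult finite_support_smult)
next
  case (lmult x q)
  then show ?case using nf_killed_amult_left by blast
next
  case (rmult x q)
  then show ?case using nf_killed_amult_right by blast
qed (simp add: nf_killed_def)

lemma nf_I_Gamma: "x \<in> I_Gamma H s \<iota> \<rho> m \<Longrightarrow> nf (x :: _ \<Rightarrow> 'k::field) = (\<lambda>_. 0)"
proof
  fix u
  assume "x \<in> I_Gamma H s \<iota> \<rho> m"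
  then have "lin_ext (nf_ctx None None [] [] u) x = 0"
    using nf_killed_I_Gamma unfolding nf_killed_def by blast
  moreover have "nf_ctx None None [] [] u = (\<lambda>p. nf_path p u :: 'k)"
    by (simp add: fun_eq_iff nf_ctx_def fits_def nf_path_def)
  ultimately show "nf x u = 0" by (simp add: nf_def)
qed

section \<open>Termination and uniqueness of reductions\<close>

definition V1_weight :: "('h set, 'h) path \<Rightarrow> nat" where
  "V1_weight p = length (filter (\<lambda>a. s a \<in> V1) (snd p))"

text \<open>Reductions of type (a) lower the weight of a path; those of type (b) and (c) delete a
  path, which may have weight \<open>0\<close>; hence the exponential.\<close>

definition red_measure :: "(('h set, 'h) path \<Rightarrow> 'k::field) \<Rightarrow> nat" where
  "red_measure f = (\<Sum>p\<in>{p. f p \<noteq> 0}. 2 ^ V1_weight p)"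

lemma filter_V1_cyc_pow:
  "h \<in> H \<Longrightarrow> filter (\<lambda>a. s a \<in> V1) (cyc_pow h) = (if s h \<in> V1 then cyc_pow h else [])"
  using s_cyc_pow by (auto simp: filter_id_conv filter_empty_conv)

lemma cycle_reduction:
  fixes q r :: "('h set, 'h) path"
  assumes h: "h \<in> H" "s h \<in> V1" and valid_q: "qvalid arrows' q" and valid_r: "qvalid arrows' r"
    and tgt_r: "ptgt tgtQ r = srcQ h" and fst_q: "fst q = srcQ h"
  defines "w \<equiv> pcomp q (pcomp (mkP \<iota> (cyc_pow h)) r)"
    and "w' \<equiv> pcomp q (pcomp (mkP \<iota> (cyc_pow (\<iota> h))) r)"
  shows "amult tgtQ (amult tgtQ (pvec q) (pvec (mkP \<iota> (cyc_pow (\<iota> h))))) (pvec r) =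
      (pvec w' :: _ \<Rightarrow> 'k::field)"
    and "qvalid arrows' w'" and "V1_weight w' < V1_weight w"
    and "(nf_path w' :: _ \<Rightarrow> 'k::field) = nf_path w"
proof -
  have "\<iota> h \<in> H" "s (\<iota> h) \<in> V2" using h iota_in_H s_iota_in_V2 by auto
  then have "s (\<iota> h) \<notin> V1" using V1_V2_disjoint by blast
  define T where "T = mkP \<iota> (cyc_pow (\<iota> h))"
  have tgt_T: "ptgt tgtQ T = fst q" and fst_T: "fst (pcomp q T) = ptgt tgtQ r"
    using fst_q tgt_r h \<open>\<iota> h \<in> H\<close> by (simp_all add: T_def ptgt_mkP_cyc_pow fst_mkP_cyc_pow bsrc_iota)
  have "pcomp (pcomp q T) r = w'" by (simp add: w'_def T_def pcomp_def)
  then show "amult tgtQ (amult tgtQ (pvec q) (pvec (mkP \<iota> (cyc_pow (\<iota> h))))) (pvec r) =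
      (pvec w' :: _ \<Rightarrow> 'k::field)"
    by (simp add: amult_pvec_pvec_left[OF tgt_T] amult_pvec_pvec_right[OF fst_T] flip: T_def)
  show "qvalid arrows' w'"
    using qvalid_short_chain[OF short_chain_cyc_pow[OF \<open>\<iota> h \<in> H\<close> \<open>s (\<iota> h) \<in> V2\<close>]]
      valid_path_pcomp[OF valid_path_pcomp[OF valid_q _ tgt_T] valid_r fst_T[symmetric]]
      \<open>pcomp (pcomp q T) r = w'\<close> by (simp add: T_def)
  show "V1_weight w' < V1_weight w"
    using h \<open>\<iota> h \<in> H\<close> \<open>s (\<iota> h) \<notin> V1\<close> cyc_pow_nonempty
    by (simp add: V1_weight_def w_def w'_def filter_V1_cyc_pow)
  show "(nf_path w' :: _ \<Rightarrow> 'k) = nf_path w"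
    using h cyc_pow_nonempty \<open>\<iota> h \<in> H\<close>
    by (simp add: nf_path_def w_def w'_def nf_list_cyc_pow[OF h(1)])
qed

lemma red_step_cases:
  fixes f g :: "('h set, 'h) path \<Rightarrow> 'k::field"
  assumes "red_step (qvalid arrows') tgtQ RG f g"
  obtains (replace) w w' where "f w \<noteq> 0" "qvalid arrows' w" "qvalid arrows' w'"
      "V1_weight w' < V1_weight w" "(nf_path w' :: _ \<Rightarrow> 'k) = nf_path w"
      "g = (\<lambda>x. f x + f w * (pvec w' x - pvec w x))"
  | (delete) w where "f w \<noteq> 0" "qvalid arrows' w" "(nf_path w :: _ \<Rightarrow> 'k) = (\<lambda>_. 0)"
      "g = (\<lambda>x. f x + f w * (0 - pvec w x))"
proof -
  obtain t \<phi> q r where rule: "(t, \<phi>) \<in> RG" and valid_q: "qvalid arrows' q"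
    and valid_r: "qvalid arrows' r" and tgt_r: "ptgt tgtQ r = fst t" and tgt_t: "ptgt tgtQ t = fst q"
    and "f (pcomp q (pcomp t r)) \<noteq> 0"
    and g: "g = (\<lambda>x. f x + f (pcomp q (pcomp t r)) *
               (amult tgtQ (amult tgtQ (pvec q) \<phi>) (pvec r) x - pvec (pcomp q (pcomp t r)) x))"
    using assms unfolding red_step_def by blast
  define w where "w = pcomp q (pcomp t r)"
  have "qvalid arrows' (pcomp t r)"
    using valid_path_pcomp[OF R_Gamma_ruleD(1)[OF rule] valid_r tgt_r] .
  then have valid_w: "qvalid arrows' w"
    using valid_path_pcomp[OF valid_q] ptgt_pcomp_left[OF tgt_r] tgt_t by (simp add: w_def)
  have "f w \<noteq> 0" using \<open>f (pcomp q (pcomp t r)) \<noteq> 0\<close> by (simp add: w_def)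
  from rule show thesis
  proof (cases rule: R_GammaE)
    case (cycle h)
    then have "ptgt tgtQ r = srcQ h" "fst q = srcQ h"
      using tgt_r tgt_t by (simp_all add: fst_mkP_cyc_pow ptgt_mkP_cyc_pow)
    note reduction = cycle_reduction[OF cycle(1,2) valid_q valid_r this]
    show thesis
      using replace[OF \<open>f w \<noteq> 0\<close> valid_w, of "pcomp q (pcomp (mkP \<iota> (cyc_pow (\<iota> h))) r)"]
        reduction(2-4) cycle by (simp add: g w_def reduction(1))
  next
    case (overlong h)
    then have "(nf_path w :: _ \<Rightarrow> 'k) = (\<lambda>_. 0)"
      using nf_list_cyc_pow_arrow by (simp add: nf_path_def w_def cyc_pow_arrow_def)
    with overlong show thesis
      using delete[OF \<open>f w \<noteq> 0\<close> valid_w] by (simp add: g w_def)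
  next
    case (pair a b)
    then have "(nf_path w :: _ \<Rightarrow> 'k) = (\<lambda>_. 0)"
      by (simp add: nf_path_def w_def nf_list_non_rho_chain[simplified])
    with pair show thesis
      using delete[OF \<open>f w \<noteq> 0\<close> valid_w] by (simp add: g w_def)
  qed
qed

lemma red_measure_less:
  assumes fin: "finite {p. f p \<noteq> 0}" and "f w \<noteq> 0" and "finite W"
    and supp: "{p. g p \<noteq> 0} \<subseteq> W \<union> ({p. f p \<noteq> 0} - {w})"
    and less: "(\<Sum>p\<in>W. 2 ^ V1_weight p) < (2::nat) ^ V1_weight w"
  shows "red_measure g < red_measure f"
proof -
  let ?S = "{p. f p \<noteq> 0} - {w}"
  have "red_measure g \<le> (\<Sum>p\<in>W \<union> ?S. 2 ^ V1_weight p)"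
    unfolding red_measure_def using fin \<open>finite W\<close> by (intro sum_mono2[OF _ supp]) simp_all
  also have "\<dots> \<le> (\<Sum>p\<in>W. 2 ^ V1_weight p) + (\<Sum>p\<in>?S. 2 ^ V1_weight p)"
    using fin \<open>finite W\<close> by (simp add: sum_Un_nat)
  also have "\<dots> < 2 ^ V1_weight w + (\<Sum>p\<in>?S. 2 ^ V1_weight p)"
    using less by simp
  also have "\<dots> = red_measure f"
    unfolding red_measure_def using sum.remove[OF fin, of w "\<lambda>p. (2::nat) ^ V1_weight p"] \<open>f w \<noteq> 0\<close>
    by simp
  finally show ?thesis .
qed

lemma red_step_decreases:
  fixes f g :: "('h set, 'h) path \<Rightarrow> 'k::field"
  assumes step: "red_step (qvalid arrows') tgtQ RG f g" and f: "f \<in> path_alg (qvalid arrows')"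
  shows "g \<in> path_alg (qvalid arrows') \<and> red_measure g < red_measure f \<and> nf g = nf f"
proof -
  let ?S = "{p. f p \<noteq> 0}"
  have fin: "finite ?S" and valid: "\<And>p. f p \<noteq> 0 \<Longrightarrow> qvalid arrows' p"
    using f unfolding path_alg_def by blast+
  from step show ?thesis
  proof (cases rule: red_step_cases)
    case (replace w w')
    have "w' \<noteq> w" using replace(4) by auto
    then have supp: "{p. g p \<noteq> 0} \<subseteq> {w'} \<union> (?S - {w})"
      using replace(6) by (auto simp: pvec_def)
    then have "red_measure g < red_measure f"
      using red_measure_less[OF fin replace(1) _ supp] replace(4) by simp
    moreover have "g \<in> path_alg (qvalid arrows')"
      using supp finite_subset[OF supp] fin valid replace(3) unfolding path_alg_def by blast
    moreover have "nf g u = nf f u" for u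
      using replace(5) lin_ext_add_pvec_diff[OF fin] by (simp add: nf_def replace(6))
    ultimately show ?thesis by blast
  next
    case (delete w)
    then have supp: "{p. g p \<noteq> 0} \<subseteq> {} \<union> (?S - {w})"
      by (auto simp: pvec_def)
    then have "red_measure g < red_measure f"
      using red_measure_less[OF fin delete(1) _ supp] by simp
    moreover have "g \<in> path_alg (qvalid arrows')"
      using supp finite_subset[OF supp] fin valid unfolding path_alg_def by blast
    moreover have "nf g u = nf f u" for u
      using delete(3) lin_ext_add_pvec_neg[OF fin] by (simp add: nf_def delete(4))
    ultimately show ?thesis by blast
  qed
qed

lemma reduction_unique_R_Gamma:
  assumes "qvalid arrows' p"
  shows "reduction_unique (qvalid arrows') tgtQ (RG :: (_ \<times> (_ \<Rightarrow> 'k::field)) set) p"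
proof (rule reduction_unique_if_invariant[where P = "\<lambda>f. f \<in> path_alg (qvalid arrows')"
      and \<mu> = red_measure and N = nf])
  fix f g :: "_ \<Rightarrow> 'k"
  assume "f \<in> path_alg (qvalid arrows')" "red_step (qvalid arrows') tgtQ RG f g"
  then show "g \<in> path_alg (qvalid arrows') \<and> red_measure g < red_measure f \<and> nf g = nf f"
    using red_step_decreases by blast
next
  fix f :: "_ \<Rightarrow> 'k"
  assume "f \<in> path_alg (qvalid arrows')" "\<forall>u. f u \<noteq> 0 \<longrightarrow> irreducible_path RG u"
  then show "nf f = f"
    using nf_irreducible irreducible_path_R_Gamma_iff by blast
qed (rule pvec_in_path_alg, rule assms)

lemma nf_minus_in_I_Gamma:
  "f \<in> path_alg (qvalid H) \<Longrightarrow> (\<lambda>x. f x - nf f x) \<in> (I_Gamma H s \<iota> \<rho> m :: (_ \<Rightarrow> 'k::field) set)"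
  using lin_ext_minus_in_ideal_gen[OF pvec_minus_nf_path_in_I_Gamma[unfolded I_Gamma_def validQ_eq]]
  unfolding nf_def I_Gamma_def validQ_eq .

lemma nf_minus_in_R_ideal:
  "f \<in> path_alg (qvalid arrows') \<Longrightarrow>
    (\<lambda>x. f x - nf f x) \<in> ideal_gen (qvalid arrows') tgtQ (R_generators :: (_ \<Rightarrow> 'k::field) set)"
  using lin_ext_minus_in_ideal_gen[OF pvec_minus_nf_path_in_R_ideal] unfolding nf_def .

lemma I'_Gamma_eq_R_ideal:
  "I'_Gamma H s \<iota> \<rho> m V1 = ideal_gen (qvalid arrows') tgtQ (R_generators :: (_ \<Rightarrow> 'k::field) set)"
proof (intro equalityI subsetI)
  fix x :: "_ \<Rightarrow> 'k"
  assume "x \<in> I'_Gamma H s \<iota> \<rho> m V1"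
  then have "x \<in> I_Gamma H s \<iota> \<rho> m" "x \<in> path_alg (qvalid arrows')"
    by (simp_all add: I'_Gamma_def validQ'_eq)
  then show "x \<in> ideal_gen (qvalid arrows') tgtQ R_generators"
    using nf_minus_in_R_ideal nf_I_Gamma by fastforce
qed (rule R_ideal_subset_I'_Gamma)

lemma irreducible_eq_if_diff_in_I_Gamma:
  fixes g g' :: "('h set, 'h) path \<Rightarrow> 'k::field"
  assumes g: "g \<in> path_alg (qvalid arrows')" "\<forall>u. g u \<noteq> 0 \<longrightarrow> irreducible (snd u)"
    and g': "g' \<in> path_alg (qvalid arrows')" "\<forall>u. g' u \<noteq> 0 \<longrightarrow> irreducible (snd u)"
    and diff: "(\<lambda>x. g x - g' x) \<in> I_Gamma H s \<iota> \<rho> m"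
  shows "g = g'"
proof -
  have "nf (\<lambda>x. g x - g' x) = (\<lambda>u. nf g u - nf g' u)"
    using g(1) g'(1) unfolding path_alg_def by (blast intro: nf_diff)
  then have "(\<lambda>u. nf g u - nf g' u) = (\<lambda>_. 0)"
    using nf_I_Gamma[OF diff] by (simp only:)
  then have "(\<lambda>u. g u - g' u) = (\<lambda>_. 0)"
    using nf_irreducible[OF g] nf_irreducible[OF g'] by (simp only:)
  then show "g = g'"
    by (simp add: fun_eq_iff)
qed

lemma irreducible_representative:
  fixes f :: "('h set, 'h) path \<Rightarrow> 'k::field"
  assumes f: "f \<in> path_alg (qvalid arrows')"
  shows "\<exists>!g. g \<in> path_alg (qvalid arrows') \<and> (\<forall>u. g u \<noteq> 0 \<longrightarrow> irreducible (snd u)) \<and>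
           (\<lambda>x. f x - g x) \<in> I'_Gamma H s \<iota> \<rho> m V1"
proof (rule ex1I[of _ "nf f"])
  have "f \<in> path_alg (qvalid H)" using path_alg_mono[OF f qvalid_mono[OF arrows'_subset_H]] .
  then have nf: "nf f \<in> path_alg (qvalid arrows')" "\<forall>u. nf f u \<noteq> 0 \<longrightarrow> irreducible (snd u)"
    using nf_in_path_alg by blast+
  moreover have f_nf: "(\<lambda>x. f x - nf f x) \<in> I'_Gamma H s \<iota> \<rho> m V1"
    using nf_minus_in_R_ideal[OF f] I'_Gamma_eq_R_ideal by blast
  ultimately show "nf f \<in> path_alg (qvalid arrows') \<and> (\<forall>u. nf f u \<noteq> 0 \<longrightarrow> irreducible (snd u)) \<and>
      (\<lambda>x. f x - nf f x) \<in> I'_Gamma H s \<iota> \<rho> m V1" by blast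
  fix g
  assume g: "g \<in> path_alg (qvalid arrows') \<and> (\<forall>u. g u \<noteq> 0 \<longrightarrow> irreducible (snd u)) \<and>
      (\<lambda>x. f x - g x) \<in> I'_Gamma H s \<iota> \<rho> m V1"
  have "(\<lambda>x. f x - nf f x) \<in> I_Gamma H s \<iota> \<rho> m" "(\<lambda>x. f x - g x) \<in> I_Gamma H s \<iota> \<rho> m"
    using f_nf g by (simp_all add: I'_Gamma_def)
  then have "(\<lambda>x. (f x - nf f x) - (f x - g x)) \<in> I_Gamma H s \<iota> \<rho> m"
    unfolding I_Gamma_def by (rule ideal_gen_diff)
  then have "(\<lambda>x. g x - nf f x) \<in> I_Gamma H s \<iota> \<rho> m"
    by simp
  with g nf show "g = nf f"
    by (intro irreducible_eq_if_diff_in_I_Gamma) auto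
qed

end

theorem mainTheorem2:
  fixes V :: "'v set" and H :: "'h set" and s :: "'h \<Rightarrow> 'v" and \<iota> \<rho> :: "'h \<Rightarrow> 'h"
    and m :: "'v \<Rightarrow> nat" and V1 V2 :: "'v set"
  assumes "alg_closed TYPE('k::field_char_0)"
    and "brauer_graph V H s \<iota> \<rho> m"
    and "bipartition V H s \<iota> V1 V2"
  shows "reduction_system (validQ' H s \<iota> \<rho> m V1) (btgt \<iota> \<rho>)
            (R_Gamma H s \<iota> \<rho> m V1 V2 :: (('h set, 'h) path \<times> (('h set, 'h) path \<Rightarrow> 'k)) set)
       \<and> diamond_condition (validQ' H s \<iota> \<rho> m V1) (btgt \<iota> \<rho>)
            (R_Gamma H s \<iota> \<rho> m V1 V2 :: (('h set, 'h) path \<times> (('h set, 'h) path \<Rightarrow> 'k)) set)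
            (I'_Gamma H s \<iota> \<rho> m V1)
       \<and> (\<forall>f \<in> path_alg (validQ' H s \<iota> \<rho> m V1) :: (('h set, 'h) path \<Rightarrow> 'k) set.
            \<exists>!g. g \<in> path_alg (validQ' H s \<iota> \<rho> m V1) \<and>
                 (\<forall>u. g u \<noteq> 0 \<longrightarrow>
                    irreducible_path (R_Gamma H s \<iota> \<rho> m V1 V2 :: (('h set, 'h) path \<times> (('h set, 'h) path \<Rightarrow> 'k)) set) u) \<and>
                 (\<lambda>x. f x - g x) \<in> I'_Gamma H s \<iota> \<rho> m V1)
       \<and> (\<forall>f \<in> path_alg (validQ H \<iota> \<rho>) :: (('h set, 'h) path \<Rightarrow> 'k) set.
            \<exists>g \<in> path_alg (validQ' H s \<iota> \<rho> m V1). (\<lambda>x. f x - g x) \<in> I_Gamma H s \<iota> \<rho> m)"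
proof -
  interpret bipartite_brauer_graph V H s \<iota> \<rho> m V1 V2
    using assms(2,3) by unfold_locales
  have "diamond_condition (qvalid arrows') tgtQ (RG :: (_ \<times> (_ \<Rightarrow> 'k)) set) (I'_Gamma H s \<iota> \<rho> m V1)"
    unfolding diamond_condition_def using I'_Gamma_eq_R_ideal reduction_unique_R_Gamma by blast
  moreover have "\<exists>g \<in> path_alg (qvalid arrows'). (\<lambda>x. f x - g x) \<in> I_Gamma H s \<iota> \<rho> m"
    if "f \<in> path_alg (qvalid H)" for f :: "_ \<Rightarrow> 'k"
    using nf_in_path_alg(1)[OF that] nf_minus_in_I_Gamma[OF that] by blast
  moreover have "\<forall>f \<in> path_alg (qvalid arrows'). \<exists>!g. g \<in> path_alg (qvalid arrows') \<and>
      (\<forall>u. g u \<noteq> 0 \<longrightarrow> irreducible_path (RG :: (_ \<times> (_ \<Rightarrow> 'k)) set) u) \<and>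
      (\<lambda>x. f x - g x) \<in> I'_Gamma H s \<iota> \<rho> m V1"
    unfolding irreducible_path_R_Gamma_iff using irreducible_representative by blast
  ultimately show ?thesis
    using reduction_system_R_Gamma unfolding validQ_eq validQ'_eq by blast
qed

end
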